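(* Let $\Gamma$ be a reduced plumbing tree with invertible framing matrix $B$ and $\tau=(Q,a,\xi)$ with $a\in\delta+2Q^{V(\Gamma)}$ and $\xi$ a Weyl assignment. In the formal sum defining $\mathsf{Y}_\tau(q,t)$, the exponents $\xi^{-1}(\ell)$ of $t$ occurring with $c_{\Gamma,\xi}(\ell)\neq0$ are bounded above (they lie in a finite union of sets $\beta-Q_{\ge0}$, where $Q_{\ge0}$ is the set of nonnegative integer combinations of positive roots), and for each $\beta\in Q$ only finitely many $\ell\in a+2BQ^{V(\Gamma)}$ with $c_{\Gamma,\xi}(\ell)\ne0$ have $\xi^{-1}(\ell)=\beta$. Consequently $\mathsf{Y}_\tau(q,t)$ is well defined and $$\mathsf{Y}_\tau(q,t)\in q^{\frac12(3\sigma(B)-\mathrm{tr}B)\langle\rho,\rho\rangle-\frac18\langle a,a\rangle}\,\mathbb{Z}[q^{\pm1/2}]((t_1^{-1},\dots,t_r^{-1})).$$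
   Context: Root data: $Q$ a root lattice of rank $r$, $\Delta^+$ positive roots, $\rho=\frac12\sum_{\alpha\in\Delta^+}\alpha$, $W$ the Weyl group, $\ell(w)$ the length. $z^\beta$ (resp. $t^\beta$) for $\beta\in Q$ is the Laurent monomial $\prod_i z_i^{\langle\beta^\vee,\lambda_i\rangle}$ ($\lambda_i$ fundamental weights), additive in $\beta$. $k(\alpha)$ is the Kostant partition function. For $x\in W$: $K_x(z)=(-1)^{\ell(x)}\sum_{\alpha\in Q}k(\alpha)z^{-x(2\rho+2\alpha)}$; $D(z)=\sum_{w\in W}(-1)^{\ell(w)}z^{2w(\rho)}$; $K_{x,0}=D^2,K_{x,1}=D,K_{x,2}=1,K_{x,n}=K_x^{n-2}$ ($n\ge3$). $[f]_\beta$ is the coefficient of $z^\beta$. Plumbing: $\Gamma$ a finite tree with integer weights $m_v$; framing matrix $B$ ($B_{vv}=m_v$, $B_{uv}=1$ if adjacent, else 0), $\det B\ne0$; $\pi(B)$ = number of positive eigenvalues, $\sigma(B)$ = signature. $(Bu)_v=\sum_{v'}B_{vv'}u_{v'}$ for $u\in Q^{V(\Gamma)}$. Pairing $\langle a,b\rangle=\sum_{u,v}(B^{-1})_{uv}\langle a_u,b_v\rangle$. $\delta_v=(2-\deg v)2\rho$. Neumann moves: (A$\pm$) delete a degree-2 vertex of weight $\pm1$ whose neighbors have weights $m_1\pm1,m_2\pm1$, join the neighbors, new weights $m_1,m_2$; (B$\pm$) delete a leaf of weight $\pm1$ whose neighbor has weight $m_1\pm1$, neighbor gets weight $m_1$;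 (C) delete a degree-2 vertex of weight 0 and merge its neighbors (weights $m_1,m_2$) into one vertex of weight $m_1+m_2$; plus inverses. Contractible subtree: turned into one vertex by Neumann moves. Reducible vertex: degree $\ge3$ dropping to 1 or 2 after contracting all incident contractible subtrees. Reduced: no reducible vertices. Weyl assignment: $\xi:V(\Gamma)\to W$ with $\xi_v=1_W$ if $\deg v=2$ and, for each maximal contractible degree-2 path (path with all non-terminal vertices of degree 2, contractible, maximal among such) with terminal vertices $v,v'$ not both of degree 2, $\xi_v=\iota^{\pi(B)-\pi(\overline B)}\xi_{v'}$ where $\iota\in W$ acts by $-1$ and $\overline B$ is the framing matrix after contracting the path. Series: $c_{\Gamma,\xi}(\ell)=\prod_v[K_{\xi_v,\deg v}(z_v)]_{\ell_v}$, $\xi^{-1}(\ell)=\sum_v\xi_v^{-1}(\ell_v)$, $\mathsf{Y}_\tau(q,t)=(-1)^{|\Delta^+|\pi(B)}q^{\frac12(3\sigma(B)-\mathrm{tr}B)\langle\rho,\rho\rangle}\sum_{\ell\in a+2BQ^{V(\Gamma)}}c_{\Gamma,\xi}(\ell)t^{\xi^{-1}(\ell)}q^{-\frac18\langle\ell,\ell\rangle}$. *)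

theory Defs
  imports "HOL-Analysis.Analysis" "HOL-Library.Function_Algebras"
          "HOL-Combinatorics.Permutations" "HOL-Computational_Algebra.Polynomial"
begin

text \<open>The root lattice Q of rank r = CARD('i) is modelled as 'i => int
  (coordinates w.r.t. the simple roots).  A i j = <alpha_i^vee, alpha_j>.
  The invariant form is (beta,gamma) = sum_ij beta_i d_i A_ij gamma_j with
  (alpha_i,alpha_i) = 2 d_i.\<close>

definition cartan_finite :: "('i::finite \<Rightarrow> 'i \<Rightarrow> int) \<Rightarrow> ('i \<Rightarrow> int) \<Rightarrow> bool" where
  "cartan_finite A d \<longleftrightarrow>
     (\<forall>i. A i i = 2) \<and> (\<forall>i j. i \<noteq> j \<longrightarrow> A i j \<le> 0) \<and> (\<forall>i. 0 < d i) \<and>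
     (\<forall>i j. d i * A i j = d j * A j i) \<and>
     (\<forall>\<beta>::'i \<Rightarrow> int. \<beta> \<noteq> 0 \<longrightarrow> 0 < (\<Sum>i\<in>UNIV. \<Sum>j\<in>UNIV. \<beta> i * d i * A i j * \<beta> j))"

definition rform :: "('i::finite \<Rightarrow> 'i \<Rightarrow> int) \<Rightarrow> ('i \<Rightarrow> int) \<Rightarrow> ('i \<Rightarrow> int) \<Rightarrow> ('i \<Rightarrow> int) \<Rightarrow> int" where
  "rform A d \<beta> \<gamma> = (\<Sum>i\<in>UNIV. \<Sum>j\<in>UNIV. \<beta> i * d i * A i j * \<gamma> j)"

definition srefl :: "('i::finite \<Rightarrow> 'i \<Rightarrow> int) \<Rightarrow> 'i \<Rightarrow> ('i \<Rightarrow> int) \<Rightarrow> ('i \<Rightarrow> int)" where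
  "srefl A i \<beta> = (\<lambda>k. \<beta> k - (if k = i then (\<Sum>j\<in>UNIV. A i j * \<beta> j) else 0))"

definition wword :: "('i::finite \<Rightarrow> 'i \<Rightarrow> int) \<Rightarrow> 'i list \<Rightarrow> (('i \<Rightarrow> int) \<Rightarrow> ('i \<Rightarrow> int))" where
  "wword A is = foldr (\<lambda>i f. srefl A i \<circ> f) is id"

definition weyl :: "('i::finite \<Rightarrow> 'i \<Rightarrow> int) \<Rightarrow> (('i \<Rightarrow> int) \<Rightarrow> ('i \<Rightarrow> int)) set" where
  "weyl A = range (wword A)"

definition wlen :: "('i::finite \<Rightarrow> 'i \<Rightarrow> int) \<Rightarrow> (('i \<Rightarrow> int) \<Rightarrow> ('i \<Rightarrow> int)) \<Rightarrow> nat" where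
  "wlen A w = (LEAST n. \<exists>is. length is = n \<and> wword A is = w)"

definition wsgn :: "('i::finite \<Rightarrow> 'i \<Rightarrow> int) \<Rightarrow> (('i \<Rightarrow> int) \<Rightarrow> ('i \<Rightarrow> int)) \<Rightarrow> int" where
  "wsgn A w = (-1) ^ wlen A w"

definition sroot :: "'i \<Rightarrow> ('i \<Rightarrow> int)" where
  "sroot i = (\<lambda>k. if k = i then 1 else 0)"

definition roots :: "('i::finite \<Rightarrow> 'i \<Rightarrow> int) \<Rightarrow> ('i \<Rightarrow> int) set" where
  "roots A = {w (sroot i) | w i. w \<in> weyl A}"

definition posroots :: "('i::finite \<Rightarrow> 'i \<Rightarrow> int) \<Rightarrow> ('i \<Rightarrow> int) set" where
  "posroots A = {\<alpha> \<in> roots A. \<forall>k. 0 \<le> \<alpha> k}"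

text \<open>2 rho (rho itself lies in the weight lattice; only 2 rho is needed).\<close>
definition two_rho :: "('i::finite \<Rightarrow> 'i \<Rightarrow> int) \<Rightarrow> ('i \<Rightarrow> int)" where
  "two_rho A = (\<Sum>\<alpha>\<in>posroots A. \<alpha>)"

definition rho_sq :: "('i::finite \<Rightarrow> 'i \<Rightarrow> int) \<Rightarrow> ('i \<Rightarrow> int) \<Rightarrow> rat" where
  "rho_sq A d = of_int (rform A d (two_rho A) (two_rho A)) / 4"

definition Qpos :: "('i::finite \<Rightarrow> 'i \<Rightarrow> int) \<Rightarrow> ('i \<Rightarrow> int) set" where
  "Qpos A = {\<gamma>. \<exists>n::('i \<Rightarrow> int) \<Rightarrow> nat. \<gamma> = (\<lambda>k. \<Sum>\<alpha>\<in>posroots A. int (n \<alpha>) * \<alpha> k)}"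

definition kostant :: "('i::finite \<Rightarrow> 'i \<Rightarrow> int) \<Rightarrow> ('i \<Rightarrow> int) \<Rightarrow> nat" where
  "kostant A \<alpha> = card {n::('i \<Rightarrow> int) \<Rightarrow> nat. (\<forall>\<gamma>. \<gamma> \<notin> posroots A \<longrightarrow> n \<gamma> = 0) \<and>
                        (\<lambda>k. \<Sum>\<gamma>\<in>posroots A. int (n \<gamma>) * \<gamma> k) = \<alpha>}"

section \<open>Formal Laurent series in z: coefficient functions Q => int
  (the value at beta is the coefficient of z^beta)\<close>

definition ser_one :: "('i \<Rightarrow> int) \<Rightarrow> int" where
  "ser_one \<gamma> = (if \<gamma> = 0 then 1 else 0)"

definition ser_mult :: "(('i \<Rightarrow> int) \<Rightarrow> int) \<Rightarrow> (('i \<Rightarrow> int) \<Rightarrow> int) \<Rightarrow> ('i \<Rightarrow> int) \<Rightarrow> int" where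
  "ser_mult f g \<gamma> = (\<Sum>(b, c) \<in> {(b, c). b + c = \<gamma> \<and> f b \<noteq> 0 \<and> g c \<noteq> 0}. f b * g c)"

primrec ser_pow :: "(('i \<Rightarrow> int) \<Rightarrow> int) \<Rightarrow> nat \<Rightarrow> ('i \<Rightarrow> int) \<Rightarrow> int" where
  "ser_pow f 0 = ser_one"
| "ser_pow f (Suc n) = ser_mult f (ser_pow f n)"

definition Dser :: "('i::finite \<Rightarrow> 'i \<Rightarrow> int) \<Rightarrow> ('i \<Rightarrow> int) \<Rightarrow> int" where
  "Dser A \<gamma> = (\<Sum>w\<in>{w \<in> weyl A. w (two_rho A) = \<gamma>}. wsgn A w)"

definition Kser :: "('i::finite \<Rightarrow> 'i \<Rightarrow> int) \<Rightarrow> (('i \<Rightarrow> int) \<Rightarrow> ('i \<Rightarrow> int)) \<Rightarrow> ('i \<Rightarrow> int) \<Rightarrow> int" where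
  "Kser A x \<gamma> = wsgn A x *
     (\<Sum>\<alpha>\<in>{\<alpha>. - x (\<lambda>k. two_rho A k + 2 * \<alpha> k) = \<gamma>}. int (kostant A \<alpha>))"

definition Kn :: "('i::finite \<Rightarrow> 'i \<Rightarrow> int) \<Rightarrow> (('i \<Rightarrow> int) \<Rightarrow> ('i \<Rightarrow> int)) \<Rightarrow> nat \<Rightarrow> ('i \<Rightarrow> int) \<Rightarrow> int" where
  "Kn A x n = (if n = 0 then ser_mult (Dser A) (Dser A)
               else if n = 1 then Dser A
               else if n = 2 then ser_one
               else ser_pow (Kser A x) (n - 2))"

type_synonym pgraph = "nat set \<times> (nat \<Rightarrow> nat \<Rightarrow> bool) \<times> (nat \<Rightarrow> int)"

definition pV :: "pgraph \<Rightarrow> nat set" where "pV G = fst G"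
definition pE :: "pgraph \<Rightarrow> nat \<Rightarrow> nat \<Rightarrow> bool" where "pE G = fst (snd G)"
definition pm :: "pgraph \<Rightarrow> nat \<Rightarrow> int" where "pm G = snd (snd G)"

definition wf_pg :: "pgraph \<Rightarrow> bool" where
  "wf_pg G \<longleftrightarrow> finite (pV G) \<and>
     (\<forall>x y. pE G x y \<longrightarrow> x \<in> pV G \<and> y \<in> pV G \<and> x \<noteq> y \<and> pE G y x)"

definition pdeg :: "pgraph \<Rightarrow> nat \<Rightarrow> nat" where
  "pdeg G v = card {u \<in> pV G. pE G v u}"

definition is_tree :: "pgraph \<Rightarrow> bool" where
  "is_tree G \<longleftrightarrow> wf_pg G \<and> pV G \<noteq> {} \<and>
     (\<forall>u\<in>pV G. \<forall>w\<in>pV G. (pE G)\<^sup>*\<^sup>* u w) \<and>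
     card {{x, y} | x y. pE G x y} + 1 = card (pV G)"

definition framing :: "pgraph \<Rightarrow> nat \<Rightarrow> nat \<Rightarrow> int" where
  "framing G u w = (if u = w then pm G u else if pE G u w then 1 else 0)"

definition det_on :: "nat set \<Rightarrow> (nat \<Rightarrow> nat \<Rightarrow> int) \<Rightarrow> int" where
  "det_on V M = (\<Sum>p\<in>{p. p permutes V}. sign p * (\<Prod>v\<in>V. M v (p v)))"

definition charpoly_on :: "nat set \<Rightarrow> (nat \<Rightarrow> nat \<Rightarrow> int) \<Rightarrow> real poly" where
  "charpoly_on V M = (\<Sum>p\<in>{p. p permutes V}. of_int (sign p) *
      (\<Prod>v\<in>V. (if p v = v then [:- of_int (M v v), 1:] else [:- of_int (M v (p v)):])))"

definition npos :: "nat set \<Rightarrow> (nat \<Rightarrow> nat \<Rightarrow> int) \<Rightarrow> nat" where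
  "npos V M = (\<Sum>x\<in>{x::real. 0 < x \<and> poly (charpoly_on V M) x = 0}. order x (charpoly_on V M))"

definition nneg :: "nat set \<Rightarrow> (nat \<Rightarrow> nat \<Rightarrow> int) \<Rightarrow> nat" where
  "nneg V M = (\<Sum>x\<in>{x::real. x < 0 \<and> poly (charpoly_on V M) x = 0}. order x (charpoly_on V M))"

definition pi_B :: "pgraph \<Rightarrow> nat" where
  "pi_B G = npos (pV G) (framing G)"

definition sigma_B :: "pgraph \<Rightarrow> int" where
  "sigma_B G = int (npos (pV G) (framing G)) - int (nneg (pV G) (framing G))"

definition trace_B :: "pgraph \<Rightarrow> int" where
  "trace_B G = (\<Sum>v\<in>pV G. pm G v)"

definition Binv :: "pgraph \<Rightarrow> nat \<Rightarrow> nat \<Rightarrow> rat" where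
  "Binv G = (THE M. (\<forall>u\<in>pV G. \<forall>v\<in>pV G.
        (\<Sum>w\<in>pV G. of_int (framing G u w) * M w v) = (if u = v then 1 else 0)) \<and>
      (\<forall>u v. u \<notin> pV G \<or> v \<notin> pV G \<longrightarrow> M u v = 0))"

definition nmove :: "pgraph \<Rightarrow> pgraph \<Rightarrow> bool" where
  "nmove G G' \<longleftrightarrow> wf_pg G \<and>
   ((\<exists>v u1 u2 \<epsilon>. \<epsilon> \<in> {1, -1} \<and> v \<in> pV G \<and> u1 \<noteq> u2 \<and> {u \<in> pV G. pE G v u} = {u1, u2} \<and>
        pm G v = \<epsilon> \<and>
        G' = (pV G - {v},
              (\<lambda>x y. x \<in> pV G - {v} \<and> y \<in> pV G - {v} \<and> (pE G x y \<or> {x, y} = {u1, u2})),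
              (pm G)(u1 := pm G u1 - \<epsilon>, u2 := pm G u2 - \<epsilon>)))
  \<or> (\<exists>v u \<epsilon>. \<epsilon> \<in> {1, -1} \<and> v \<in> pV G \<and> {u' \<in> pV G. pE G v u'} = {u} \<and> pm G v = \<epsilon> \<and>
        G' = (pV G - {v},
              (\<lambda>x y. x \<in> pV G - {v} \<and> y \<in> pV G - {v} \<and> pE G x y),
              (pm G)(u := pm G u - \<epsilon>)))
  \<or> (\<exists>v u1 u2. v \<in> pV G \<and> u1 \<noteq> u2 \<and> {u \<in> pV G. pE G v u} = {u1, u2} \<and> pm G v = 0 \<and>
        G' = (pV G - {v, u2},
              (\<lambda>x y. x \<in> pV G - {v, u2} \<and> y \<in> pV G - {v, u2} \<and> x \<noteq> y \<and>
                     (pE G x y \<or> (x = u1 \<and> pE G u2 y) \<or> (y = u1 \<and> pE G x u2))),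
              (pm G)(u1 := pm G u1 + pm G u2))))"

definition neq :: "pgraph \<Rightarrow> pgraph \<Rightarrow> bool" where
  "neq = (\<lambda>G G'. nmove G G' \<or> nmove G' G)\<^sup>*\<^sup>*"

definition contract_rel :: "pgraph \<Rightarrow> nat set \<Rightarrow> pgraph \<Rightarrow> bool" where
  "contract_rel G T G' \<longleftrightarrow> neq G G' \<and>
     (\<exists>w\<in>T. pV G' = (pV G - T) \<union> {w} \<and>
        pE G' = (\<lambda>x y. x \<in> pV G' \<and> y \<in> pV G' \<and> x \<noteq> y \<and>
                  (\<exists>a b. pE G a b \<and> (if a \<in> T then w else a) = x \<and> (if b \<in> T then w else b) = y)) \<and>
        (\<forall>u\<in>pV G - T. pm G' u = pm G u))"

definition connected_in :: "pgraph \<Rightarrow> nat set \<Rightarrow> bool" where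
  "connected_in G T \<longleftrightarrow> (\<forall>x\<in>T. \<forall>y\<in>T. (\<lambda>a b. pE G a b \<and> a \<in> T \<and> b \<in> T)\<^sup>*\<^sup>* x y)"

definition contractible :: "pgraph \<Rightarrow> nat set \<Rightarrow> bool" where
  "contractible G T \<longleftrightarrow> T \<subseteq> pV G \<and> T \<noteq> {} \<and> connected_in G T \<and> (\<exists>G'. contract_rel G T G')"

definition reducible :: "pgraph \<Rightarrow> nat \<Rightarrow> bool" where
  "reducible G v \<longleftrightarrow> v \<in> pV G \<and> 3 \<le> pdeg G v \<and>
     (let U = \<Union>{T. contractible G T \<and> v \<in> T}
      in card {(x, y). x \<in> U \<and> y \<in> pV G - U \<and> pE G x y} \<in> {1, 2})"

definition reduced :: "pgraph \<Rightarrow> bool" where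
  "reduced G \<longleftrightarrow> (\<forall>v\<in>pV G. \<not> reducible G v)"

definition is_dpath :: "pgraph \<Rightarrow> nat list \<Rightarrow> bool" where
  "is_dpath G P \<longleftrightarrow> 2 \<le> length P \<and> distinct P \<and> set P \<subseteq> pV G \<and>
     (\<forall>i. i + 1 < length P \<longrightarrow> pE G (P ! i) (P ! (i + 1))) \<and>
     (\<forall>i. 0 < i \<and> i + 1 < length P \<longrightarrow> pdeg G (P ! i) = 2)"

definition max_cdpath :: "pgraph \<Rightarrow> nat list \<Rightarrow> bool" where
  "max_cdpath G P \<longleftrightarrow> is_dpath G P \<and> contractible G (set P) \<and>
     \<not> (\<exists>P'. is_dpath G P' \<and> contractible G (set P') \<and> set P \<subset> set P')"

text \<open>iota^k, where iota acts by -1.\<close>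
definition iota_pow :: "int \<Rightarrow> ('i \<Rightarrow> int) \<Rightarrow> ('i \<Rightarrow> int)" where
  "iota_pow k = (if even k then id else (\<lambda>\<beta>. - \<beta>))"

definition weyl_assignment ::
  "('i::finite \<Rightarrow> 'i \<Rightarrow> int) \<Rightarrow> pgraph \<Rightarrow> (nat \<Rightarrow> (('i \<Rightarrow> int) \<Rightarrow> ('i \<Rightarrow> int))) \<Rightarrow> bool" where
  "weyl_assignment A G \<xi> \<longleftrightarrow>
     (\<forall>v\<in>pV G. \<xi> v \<in> weyl A) \<and>
     (\<forall>v\<in>pV G. pdeg G v = 2 \<longrightarrow> \<xi> v = id) \<and>
     (\<forall>P. max_cdpath G P \<longrightarrow> \<not> (pdeg G (hd P) = 2 \<and> pdeg G (last P) = 2) \<longrightarrow>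
        (\<forall>G'. contract_rel G (set P) G' \<longrightarrow>
           \<xi> (hd P) = iota_pow (int (pi_B G) - int (pi_B G')) \<circ> \<xi> (last P)))"

definition delta_vec :: "('i::finite \<Rightarrow> 'i \<Rightarrow> int) \<Rightarrow> pgraph \<Rightarrow> nat \<Rightarrow> ('i \<Rightarrow> int)" where
  "delta_vec A G v = (\<lambda>k. (2 - int (pdeg G v)) * two_rho A k)"

text \<open>The coset a + 2 B Q^{V(Gamma)} (vectors are zero off V).\<close>
definition lcoset :: "pgraph \<Rightarrow> (nat \<Rightarrow> ('i \<Rightarrow> int)) \<Rightarrow> (nat \<Rightarrow> ('i \<Rightarrow> int)) set" where
  "lcoset G a = {l. (\<exists>x::nat \<Rightarrow> ('i \<Rightarrow> int). \<forall>v\<in>pV G.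
        l v = (\<lambda>k. a v k + 2 * (\<Sum>v'\<in>pV G. framing G v v' * x v' k))) \<and>
      (\<forall>v. v \<notin> pV G \<longrightarrow> l v = 0)}"

definition lpair :: "('i::finite \<Rightarrow> 'i \<Rightarrow> int) \<Rightarrow> ('i \<Rightarrow> int) \<Rightarrow> pgraph \<Rightarrow>
    (nat \<Rightarrow> ('i \<Rightarrow> int)) \<Rightarrow> (nat \<Rightarrow> ('i \<Rightarrow> int)) \<Rightarrow> rat" where
  "lpair A d G a b = (\<Sum>u\<in>pV G. \<Sum>v\<in>pV G. Binv G u v * of_int (rform A d (a u) (b v)))"

definition cGx :: "('i::finite \<Rightarrow> 'i \<Rightarrow> int) \<Rightarrow> pgraph \<Rightarrow> (nat \<Rightarrow> (('i \<Rightarrow> int) \<Rightarrow> ('i \<Rightarrow> int))) \<Rightarrow>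
    (nat \<Rightarrow> ('i \<Rightarrow> int)) \<Rightarrow> int" where
  "cGx A G \<xi> l = (\<Prod>v\<in>pV G. Kn A (\<xi> v) (pdeg G v) (l v))"

definition xiinv :: "pgraph \<Rightarrow> (nat \<Rightarrow> (('i \<Rightarrow> int) \<Rightarrow> ('i \<Rightarrow> int))) \<Rightarrow> (nat \<Rightarrow> ('i \<Rightarrow> int)) \<Rightarrow> ('i \<Rightarrow> int)" where
  "xiinv G \<xi> l = (\<Sum>v\<in>pV G. inv (\<xi> v) (l v))"

definition Yexp0 :: "('i::finite \<Rightarrow> 'i \<Rightarrow> int) \<Rightarrow> ('i \<Rightarrow> int) \<Rightarrow> pgraph \<Rightarrow> rat" where
  "Yexp0 A d G = of_int (3 * sigma_B G - trace_B G) / 2 * rho_sq A d"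

text \<open>Coefficient of t^beta q^e in Y_tau(q,t) (meaningful once the relevant sets are finite).\<close>
definition Ycoeff :: "('i::finite \<Rightarrow> 'i \<Rightarrow> int) \<Rightarrow> ('i \<Rightarrow> int) \<Rightarrow> pgraph \<Rightarrow> (nat \<Rightarrow> ('i \<Rightarrow> int)) \<Rightarrow>
    (nat \<Rightarrow> (('i \<Rightarrow> int) \<Rightarrow> ('i \<Rightarrow> int))) \<Rightarrow> ('i \<Rightarrow> int) \<Rightarrow> rat \<Rightarrow> int" where
  "Ycoeff A d G a \<xi> \<beta> e =
     (\<Sum>l\<in>{l \<in> lcoset G a. cGx A G \<xi> l \<noteq> 0 \<and> xiinv G \<xi> l = \<beta> \<and>
             Yexp0 A d G - lpair A d G l l / 8 = e}.
        (-1) ^ (card (posroots A) * pi_B G) * cGx A G \<xi> l)"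

text \<open>F lies in q^{c0} Z[q^{+-1/2}]((t_1^{-1},...,t_r^{-1})): the t-support lies in a finite
  union of cones beta0 - Q_{>=0}; each t-coefficient is a finite sum of powers q^e
  with e in c0 + (1/2) Z.\<close>
definition in_Yring :: "('i::finite \<Rightarrow> 'i \<Rightarrow> int) \<Rightarrow> rat \<Rightarrow> (('i \<Rightarrow> int) \<Rightarrow> rat \<Rightarrow> int) \<Rightarrow> bool" where
  "in_Yring A c0 F \<longleftrightarrow>
     (\<exists>S. finite S \<and> (\<forall>\<beta> e. F \<beta> e \<noteq> 0 \<longrightarrow> (\<exists>\<beta>0\<in>S. \<beta>0 - \<beta> \<in> Qpos A))) \<and>
     (\<forall>\<beta>. finite {e. F \<beta> e \<noteq> 0}) \<and>
     (\<forall>\<beta> e. F \<beta> e \<noteq> 0 \<longrightarrow> 2 * (e - c0) \<in> \<int>)"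

end

theory Submission
  imports Defs "Jordan_Normal_Form.Determinant"
begin

text \<open>The factor of \<open>c(l)\<close> at a vertex \<open>v\<close> is supported, after applying \<open>\<xi>\<^sub>v\<^sup>-\<^sup>1\<close>, below a
  finite set in the dominance order: for degree at most 2 the support is finite, since Weyl orbits
  lie on spheres of the positive definite invariant form, and for higher degree it lies in
  \<open>-Q\<^sub>+\<close> because the Kostant series does. Summing over the vertices bounds \<open>\<xi>\<^sup>-\<^sup>1(l)\<close> from
  above; once \<open>\<xi>\<^sup>-\<^sup>1(l)\<close> is fixed, the \<open>Q\<^sub>+\<close>-parts at the vertices are bounded componentwise,
  leaving finitely many \<open>l\<close>. Finally \<open>\<langle>l,l\<rangle> \<equiv> \<langle>a,a\<rangle> (mod 4)\<close> on the coset \<open>a + 2BQ\<^sup>V\<close>, since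
  the cross terms pair \<open>B\<^sup>-\<^sup>1\<close> against \<open>B\<close>; hence all \<open>q\<close>-exponents lie in the stated
  half-integral shift.\<close>

section \<open>Positive definite quadratic forms\<close>

definition quad_form :: "('a \<Rightarrow> 'a \<Rightarrow> 'f::comm_ring) \<Rightarrow> 'a set \<Rightarrow> ('a \<Rightarrow> 'f) \<Rightarrow> 'f" where
  "quad_form M I x = (\<Sum>i\<in>I. \<Sum>j\<in>I. x i * M i j * x j)"

definition pos_def_on :: "('a \<Rightarrow> 'a \<Rightarrow> 'f::linordered_field) \<Rightarrow> 'a set \<Rightarrow> bool" where
  "pos_def_on M I \<longleftrightarrow> (\<forall>x. (\<exists>i\<in>I. x i \<noteq> 0) \<longrightarrow> 0 < quad_form M I x)"

definition schur_compl :: "('a \<Rightarrow> 'a \<Rightarrow> 'f::field) \<Rightarrow> 'a \<Rightarrow> 'a \<Rightarrow> 'a \<Rightarrow> 'f" where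
  "schur_compl M n i j = M i j - M i n * M n j / M n n"

lemma quad_form_cong: "(\<And>i. i \<in> I \<Longrightarrow> x i = y i) \<Longrightarrow> quad_form M I x = quad_form M I y"
  unfolding quad_form_def by (intro sum.cong refl) auto

lemma quad_form_zero [simp]: "quad_form M I (\<lambda>_. 0) = 0"
  by (simp add: quad_form_def)

lemma quad_form_insert_complete_square:
  fixes M :: "'a \<Rightarrow> 'a \<Rightarrow> 'f::field"
  assumes "finite I" "n \<notin> I" "\<And>i j. M i j = M j i" "M n n \<noteq> 0"
  shows "quad_form M (insert n I) x =
    quad_form (schur_compl M n) I x + M n n * (x n + (\<Sum>j\<in>I. M n j * x j) / M n n)\<^sup>2"
proof -
  define s where "s = (\<Sum>j\<in>I. M n j * x j)"
  have s': "(\<Sum>i\<in>I. x i * M i n) = s"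
    unfolding s_def using assms(3) by (simp add: mult.commute)
  have "quad_form M (insert n I) x =
      x n * M n n * x n + x n * s + (\<Sum>i\<in>I. x i * M i n * x n) + quad_form M I x"
    using assms(1,2) by (simp add: quad_form_def s_def sum.distrib sum_distrib_left mult.assoc)
  also have "(\<Sum>i\<in>I. x i * M i n * x n) = s * x n"
    by (simp add: s'[symmetric] sum_distrib_right)
  finally have ins: "quad_form M (insert n I) x = quad_form M I x + 2 * x n * s + M n n * (x n)\<^sup>2"
    by (simp add: power2_eq_square algebra_simps)
  have "quad_form (schur_compl M n) I x
      = quad_form M I x - (\<Sum>i\<in>I. \<Sum>j\<in>I. (x i * M i n) * (M n j * x j) / M n n)"
    by (simp add: quad_form_def schur_compl_def algebra_simps sum_subtractf)
  also have "(\<Sum>i\<in>I. \<Sum>j\<in>I. (x i * M i n) * (M n j * x j) / M n n)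
      = (\<Sum>i\<in>I. x i * M i n) * (\<Sum>j\<in>I. M n j * x j) / M n n"
    by (simp add: sum_product sum_divide_distrib)
  also have "\<dots> = s * s / M n n"
    by (simp add: s' s_def)
  finally have schur: "quad_form (schur_compl M n) I x = quad_form M I x - s * s / M n n" .
  show ?thesis
    unfolding ins schur s_def[symmetric] using assms(4) by (simp add: power2_eq_square field_simps)
qed

lemma quad_form_nonneg:
  assumes "pos_def_on M I"
  shows "0 \<le> quad_form M I x"
proof (cases "\<exists>i\<in>I. x i \<noteq> 0")
  case True
  then show ?thesis using assms by (simp add: pos_def_on_def less_imp_le)
next
  case False
  then have "quad_form M I x = quad_form M I (\<lambda>_. 0)" by (intro quad_form_cong) auto
  then show ?thesis by simp
qed

lemma pos_def_on_pivot_pos: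
  fixes M :: "'a \<Rightarrow> 'a \<Rightarrow> 'f::linordered_field"
  assumes "finite I" "n \<notin> I" "pos_def_on M (insert n I)"
  shows "0 < M n n"
proof -
  define e :: "'a \<Rightarrow> 'f" where "e = (\<lambda>i. if i = n then 1 else 0)"
  have "0 < quad_form M (insert n I) e"
    using assms(3) unfolding pos_def_on_def by (auto simp: e_def)
  also have "quad_form M (insert n I) e = M n n"
  proof -
    have "\<forall>i\<in>I. e i = 0" using assms(2) by (auto simp: e_def)
    then show ?thesis using assms(1,2) by (simp add: quad_form_def e_def)
  qed
  finally show ?thesis .
qed

lemma pos_def_on_schur_compl:
  fixes M :: "'a \<Rightarrow> 'a \<Rightarrow> 'f::linordered_field"
  assumes "finite I" "n \<notin> I" "\<And>i j. M i j = M j i" "pos_def_on M (insert n I)"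
  shows "pos_def_on (schur_compl M n) I"
  unfolding pos_def_on_def
proof (intro allI impI)
  fix x :: "'a \<Rightarrow> 'f" assume nz: "\<exists>i\<in>I. x i \<noteq> 0"
  have piv: "M n n \<noteq> 0" using pos_def_on_pivot_pos[OF assms(1,2,4)] by simp
  define s where "s = (\<lambda>x::'a \<Rightarrow> 'f. \<Sum>j\<in>I. M n j * x j)"
  \<comment> \<open>Choosing the pivot coordinate to kill the square isolates the Schur complement.\<close>
  define y where "y = x(n := - s x / M n n)"
  have "s y = s x" unfolding s_def y_def using assms(2) by (intro sum.cong) auto
  then have "quad_form M (insert n I) y = quad_form (schur_compl M n) I y"
    using quad_form_insert_complete_square[of I n M, OF assms(1-3) piv, of y] piv
    by (simp add: s_def y_def)
  also have "\<dots> = quad_form (schur_compl M n) I x"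
    using assms(2) by (intro quad_form_cong) (auto simp: y_def)
  moreover have "\<exists>i\<in>insert n I. y i \<noteq> 0" using nz assms(2) by (auto simp: y_def)
  ultimately show "0 < quad_form (schur_compl M n) I x"
    using assms(4) unfolding pos_def_on_def by auto
qed

lemma abs_le_max_one_if_mult_square_le:
  fixes a y c :: "'f::linordered_field"
  assumes "0 < a" "a * y\<^sup>2 \<le> c"
  shows "\<bar>y\<bar> \<le> max 1 (c / a)"
proof (cases "\<bar>y\<bar> \<le> 1")
  case False
  then have "\<bar>y\<bar> * 1 \<le> \<bar>y\<bar> * \<bar>y\<bar>" by (intro mult_left_mono) auto
  then have "\<bar>y\<bar> \<le> y\<^sup>2" by (simp add: power2_eq_square)
  also have "y\<^sup>2 \<le> c / a" using assms by (simp add: pos_le_divide_eq mult.commute)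
  finally show ?thesis by simp
qed simp

lemma schur_compl_sym:
  "(\<And>i j. M i j = M j i) \<Longrightarrow> schur_compl M n i j = schur_compl M n j i"
  by (simp add: schur_compl_def mult.commute)

lemma quad_form_le_insert_bounds:
  fixes M :: "'a \<Rightarrow> 'a \<Rightarrow> 'f::linordered_field"
  assumes "finite I" "n \<notin> I" "\<And>i j. M i j = M j i" "pos_def_on M (insert n I)"
    and le: "quad_form M (insert n I) x \<le> c"
  shows "quad_form (schur_compl M n) I x \<le> c"
    and "\<bar>x n\<bar> \<le> \<bar>(\<Sum>j\<in>I. M n j * x j) / M n n\<bar> + max 1 (c / M n n)"
proof -
  define t where "t = (\<Sum>j\<in>I. M n j * x j) / M n n"
  have piv: "0 < M n n" by (rule pos_def_on_pivot_pos[OF assms(1,2,4)])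
  have schur: "0 \<le> quad_form (schur_compl M n) I x"
    by (intro quad_form_nonneg pos_def_on_schur_compl assms(1-4))
  have sq: "0 \<le> M n n * (x n + t)\<^sup>2" using piv by simp
  have split: "quad_form (schur_compl M n) I x + M n n * (x n + t)\<^sup>2 \<le> c"
    using le quad_form_insert_complete_square[of I n M, OF assms(1-3)] piv by (simp add: t_def)
  then show "quad_form (schur_compl M n) I x \<le> c" using sq by linarith
  have "\<bar>x n + t\<bar> \<le> max 1 (c / M n n)"
    using split schur by (intro abs_le_max_one_if_mult_square_le[OF piv]) linarith
  then show "\<bar>x n\<bar> \<le> \<bar>t\<bar> + max 1 (c / M n n)" by linarith
qed

text \<open>Induction on the support: completing the square bounds the new coordinate in terms of
  the others, on which the Schur complement is again positive definite.\<close>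

lemma finite_int_vectors_quad_form_le:
  fixes M :: "'a \<Rightarrow> 'a \<Rightarrow> 'f::floor_ceiling"
  assumes "finite I" "\<And>i j. M i j = M j i" "pos_def_on M I"
  shows "finite {x::'a \<Rightarrow> int. (\<forall>i. i \<notin> I \<longrightarrow> x i = 0) \<and> quad_form M I (\<lambda>i. of_int (x i)) \<le> c}"
  using assms
proof (induction I arbitrary: M c rule: finite_induct)
  case empty
  have "{x::'a \<Rightarrow> int. (\<forall>i. i \<notin> {} \<longrightarrow> x i = 0) \<and> quad_form M {} (\<lambda>i. of_int (x i)) \<le> c} \<subseteq> {0}"
    by auto
  then show ?case using finite_subset by blast
next
  case (insert n I)
  let ?M' = "schur_compl M n"
  define S' where "S' = {x::'a \<Rightarrow> int. (\<forall>i. i \<notin> I \<longrightarrow> x i = 0) \<and> quad_form ?M' I (\<lambda>i. of_int (x i)) \<le> c}"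
  have "finite S'" unfolding S'_def
    by (rule insert.IH)
      (simp_all add: schur_compl_sym[OF insert.prems(1)] pos_def_on_schur_compl[OF insert.hyps insert.prems])
  define K where "K = (\<lambda>x::'a \<Rightarrow> int.
    \<lceil>\<bar>(\<Sum>j\<in>I. M n j * of_int (x j)) / M n n\<bar> + max 1 (c / M n n)\<rceil>)"
  have "{x::'a \<Rightarrow> int. (\<forall>i. i \<notin> insert n I \<longrightarrow> x i = 0) \<and> quad_form M (insert n I) (\<lambda>i. of_int (x i)) \<le> c}
     \<subseteq> (\<lambda>(x', k). x'(n := k)) ` (SIGMA x':S'. {- K x' .. K x'})"
  proof safe
    fix x :: "'a \<Rightarrow> int"
    assume zero: "\<forall>i. i \<notin> insert n I \<longrightarrow> x i = 0"
      and le: "quad_form M (insert n I) (\<lambda>i. of_int (x i)) \<le> c"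
    note bounds = quad_form_le_insert_bounds[OF insert.hyps insert.prems le]
    define x' where "x' = x(n := 0)"
    have "quad_form ?M' I (\<lambda>i. of_int (x' i)) = quad_form ?M' I (\<lambda>i. of_int (x i))"
      using insert.hyps by (intro quad_form_cong) (auto simp: x'_def)
    then have x'_mem: "x' \<in> S'" using bounds(1) zero unfolding S'_def by (auto simp: x'_def)
    have "(\<Sum>j\<in>I. M n j * of_int (x' j)) = (\<Sum>j\<in>I. M n j * of_int (x j))"
      using insert.hyps by (intro sum.cong) (auto simp: x'_def)
    then have "of_int \<bar>x n\<bar> \<le> \<bar>(\<Sum>j\<in>I. M n j * of_int (x' j)) / M n n\<bar> + max 1 (c / M n n)"
      using bounds(2) by simp
    also have "\<dots> \<le> of_int (K x')" unfolding K_def by (rule le_of_int_ceiling)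
    finally have "of_int \<bar>x n\<bar> \<le> (of_int (K x') :: 'f)" .
    then have "\<bar>x n\<bar> \<le> K x'" by (simp only: of_int_le_iff)
    with x'_mem show "x \<in> (\<lambda>(x', k). x'(n := k)) ` (SIGMA x':S'. {- K x' .. K x'})"
      by (intro image_eqI[of _ _ "(x', x n)"]) (auto simp: x'_def)
  qed
  then show ?case by (rule finite_subset) (use \<open>finite S'\<close> in auto)
qed

lemma rat_vector_common_denominator:
  fixes x :: "'i::finite \<Rightarrow> rat"
  obtains D y where "0 < D" "\<And>i. rat_of_int (y i) = of_int D * x i"
proof -
  define num where "num = (\<lambda>i. fst (quotient_of (x i)))"
  define den where "den = (\<lambda>i. snd (quotient_of (x i)))"
  have den_pos: "0 < den i" for i unfolding den_def by (simp add: quotient_of_denom_pos')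
  have x: "x i = of_int (num i) / of_int (den i)" for i
    unfolding num_def den_def by (metis prod.collapse quotient_of_div)
  define D where "D = (\<Prod>i\<in>UNIV. den i)"
  define y where "y = (\<lambda>i. num i * (\<Prod>j\<in>UNIV - {i}. den j))"
  have "rat_of_int (y i) = of_int D * x i" for i
  proof -
    have "D = den i * (\<Prod>j\<in>UNIV - {i}. den j)"
      unfolding D_def by (simp add: prod.remove[of UNIV i])
    then show ?thesis unfolding y_def x using den_pos[of i] by (simp add: field_simps)
  qed
  moreover have "0 < D" unfolding D_def using den_pos by (simp add: prod_pos)
  ultimately show ?thesis using that by blast
qed

lemma quad_form_scale:
  fixes c :: "'f::comm_ring_1"
  shows "quad_form M I (\<lambda>i. c * x i) = c\<^sup>2 * quad_form M I x"
  unfolding quad_form_def sum_distrib_left by (intro sum.cong refl) (simp add: power2_eq_square mult_ac)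

lemma pos_def_on_rat_of_int:
  fixes M :: "'i::finite \<Rightarrow> 'i \<Rightarrow> int"
  assumes "\<And>y. y \<noteq> 0 \<Longrightarrow> 0 < (\<Sum>i\<in>UNIV. \<Sum>j\<in>UNIV. y i * M i j * y j)"
  shows "pos_def_on (\<lambda>i j. rat_of_int (M i j)) UNIV"
  unfolding pos_def_on_def
proof (intro allI impI)
  fix x :: "'i \<Rightarrow> rat" assume nz: "\<exists>i\<in>UNIV. x i \<noteq> 0"
  obtain D y where D: "0 < D" and y: "\<And>i. rat_of_int (y i) = of_int D * x i"
    using rat_vector_common_denominator[of x] by blast
  from nz obtain i where "x i \<noteq> 0" by blast
  then have "y i \<noteq> 0" using D y[of i] by auto
  then have "y \<noteq> 0" by auto
  then have "0 < rat_of_int (\<Sum>i\<in>UNIV. \<Sum>j\<in>UNIV. y i * M i j * y j)"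
    by (intro of_int_pos assms)
  also have "\<dots> = quad_form (\<lambda>i j. rat_of_int (M i j)) UNIV (\<lambda>i. rat_of_int (y i))"
    by (simp add: quad_form_def)
  also have "(\<lambda>i. rat_of_int (y i)) = (\<lambda>i. of_int D * x i)"
    using y by simp
  also have "quad_form (\<lambda>i j. rat_of_int (M i j)) UNIV (\<lambda>i. of_int D * x i) = (of_int D)\<^sup>2 * quad_form (\<lambda>i j. rat_of_int (M i j)) UNIV x"
    by (rule quad_form_scale)
  finally show "0 < quad_form (\<lambda>i j. rat_of_int (M i j)) UNIV x"
    using D by (simp add: zero_less_mult_iff)
qed

section \<open>The invariant form and the Weyl group\<close>

lemma rform_add_left: "rform A d (x + y) z = rform A d x z + rform A d y z"
  unfolding rform_def by (simp add: sum.distrib algebra_simps)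

lemma rform_add_right: "rform A d z (x + y) = rform A d z x + rform A d z y"
  unfolding rform_def by (simp add: sum.distrib algebra_simps)

lemma rform_scale_left: "rform A d (\<lambda>k. c * x k) z = c * rform A d x z"
  unfolding rform_def by (simp add: sum_distrib_left algebra_simps)

lemma rform_scale_right: "rform A d z (\<lambda>k. c * x k) = c * rform A d z x"
  unfolding rform_def by (simp add: sum_distrib_left algebra_simps)

lemma rform_sum_left:
  "finite W \<Longrightarrow> rform A d (\<lambda>k. \<Sum>w\<in>W. c w * z w k) p = (\<Sum>w\<in>W. c w * rform A d (z w) p)"
  unfolding rform_def by (simp add: sum_distrib_left sum_distrib_right mult_ac sum.swap[of _ W])

lemma rform_sum_right:
  "finite W \<Longrightarrow> rform A d p (\<lambda>k. \<Sum>w\<in>W. c w * z w k) = (\<Sum>w\<in>W. c w * rform A d p (z w))"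
  unfolding rform_def by (simp add: sum_distrib_left sum_distrib_right mult_ac sum.swap[of _ W])

lemma rform_sym:
  assumes "cartan_finite A d"
  shows "rform A d x y = rform A d y x"
proof -
  have "\<And>i j. d i * A i j = d j * A j i" using assms unfolding cartan_finite_def by blast
  then have "rform A d x y = (\<Sum>i\<in>UNIV. \<Sum>j\<in>UNIV. y j * d j * A j i * x i)"
    unfolding rform_def by (intro sum.cong refl) (metis mult.commute mult.left_commute)
  also have "\<dots> = rform A d y x" unfolding rform_def by (rule sum.swap)
  finally show ?thesis .
qed

lemma srefl_add: "srefl A i (x + y) = srefl A i x + srefl A i y"
  unfolding srefl_def by (auto simp: fun_eq_iff sum.distrib algebra_simps)

lemma srefl_eq_sroot: "srefl A i x = x - (\<lambda>k. (\<Sum>j\<in>UNIV. A i j * x j) * sroot i k)"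
  unfolding srefl_def sroot_def by (auto simp: fun_eq_iff)

lemma coroot_sroot:
  fixes A :: "'i::finite \<Rightarrow> 'i \<Rightarrow> int"
  shows "A i i = 2 \<Longrightarrow> (\<Sum>j\<in>UNIV. A i j * sroot i j) = 2"
  unfolding sroot_def by (simp add: if_distrib sum.delta cong: if_cong)

lemma rform_sroot_left: "rform A d (sroot i) y = d i * (\<Sum>j\<in>UNIV. A i j * y j)"
proof -
  have "rform A d (sroot i) y = (\<Sum>k\<in>UNIV. if k = i then \<Sum>j\<in>UNIV. d k * A k j * y j else 0)"
    unfolding rform_def sroot_def by (intro sum.cong) auto
  then show ?thesis by (simp add: sum_distrib_left mult.assoc)
qed

lemma srefl_srefl:
  fixes A :: "'i::finite \<Rightarrow> 'i \<Rightarrow> int"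
  assumes "A i i = 2"
  shows "srefl A i (srefl A i x) = x"
proof -
  define c where "c = (\<Sum>j\<in>UNIV. A i j * x j)"
  have y: "srefl A i x = x - (\<lambda>k. c * sroot i k)" unfolding srefl_eq_sroot c_def ..
  have "(\<Sum>j\<in>UNIV. A i j * (x j - c * sroot i j)) = c - c * (\<Sum>j\<in>UNIV. A i j * sroot i j)"
    unfolding c_def by (simp add: right_diff_distrib sum_subtractf sum_distrib_left mult_ac)
  then have "(\<Sum>j\<in>UNIV. A i j * srefl A i x j) = - c"
    using coroot_sroot[of A, OF assms] by (simp add: y)
  then have "srefl A i (srefl A i x) = srefl A i x + (\<lambda>k. c * sroot i k)"
    by (simp add: srefl_eq_sroot[of A i "srefl A i x"] fun_eq_iff)
  then show ?thesis by (simp add: y)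
qed

lemma rform_srefl:
  assumes "cartan_finite A d"
  shows "rform A d (srefl A i x) (srefl A i x) = rform A d x x"
proof -
  define c where "c = - (\<Sum>j\<in>UNIV. A i j * x j)"
  have Aii: "A i i = 2" using assms by (simp add: cartan_finite_def)
  have "srefl A i x = x + (\<lambda>k. c * sroot i k)"
    unfolding srefl_eq_sroot c_def by (simp add: fun_eq_iff)
  moreover have "rform A d (sroot i) x = - d i * c" "rform A d x (sroot i) = - d i * c"
    using rform_sym[OF assms, of x "sroot i"] by (simp_all add: rform_sroot_left c_def)
  moreover have "rform A d (sroot i) (sroot i) = 2 * d i"
    using coroot_sroot[of A, OF Aii] by (simp add: rform_sroot_left)
  ultimately show ?thesis
    by (simp only: rform_add_left rform_add_right rform_scale_left rform_scale_right)
      (simp add: algebra_simps)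
qed


lemma wword_Nil: "wword A [] = id"
  by (simp add: wword_def)

lemma wword_Cons: "wword A (i # is) = srefl A i \<circ> wword A is"
  by (simp add: wword_def)

lemma wword_add: "wword A is (x + y) = wword A is x + wword A is y"
  by (induction "is") (simp_all only: wword_Nil wword_Cons id_apply o_apply srefl_add)

lemma bij_wword:
  assumes "cartan_finite A d"
  shows "bij (wword A is)"
proof (induction "is")
  case Nil
  then show ?case unfolding wword_Nil by (rule bij_id)
next
  case (Cons i "is")
  have "A i i = 2" using assms by (simp add: cartan_finite_def)
  then have "bij (srefl A i)" by (intro involuntory_imp_bij) (rule srefl_srefl)
  with Cons.IH show ?case unfolding wword_Cons by (rule bij_comp)
qed

lemma rform_wword:
  assumes "cartan_finite A d"
  shows "rform A d (wword A is x) (wword A is x) = rform A d x x"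
  by (induction "is") (simp_all add: wword_Nil wword_Cons rform_srefl[OF assms])

lemma weyl_add: "w \<in> weyl A \<Longrightarrow> w (x + y) = w x + w y"
  unfolding weyl_def using wword_add by blast

lemma weyl_zero: "w \<in> weyl A \<Longrightarrow> w 0 = 0"
  using weyl_add[of w A 0 0] by simp

lemma weyl_uminus: "w \<in> weyl A \<Longrightarrow> w (- x) = - w x"
  using weyl_add[of w A x "- x"] weyl_zero[of w A] by (simp add: eq_neg_iff_add_eq_0 add.commute)

lemma weyl_bij: "cartan_finite A d \<Longrightarrow> w \<in> weyl A \<Longrightarrow> bij w"
  unfolding weyl_def using bij_wword by blast

lemma weyl_rform: "cartan_finite A d \<Longrightarrow> w \<in> weyl A \<Longrightarrow> rform A d (w x) (w x) = rform A d x x"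
  unfolding weyl_def using rform_wword by blast

lemma finite_weyl_orbit:
  assumes "cartan_finite A d"
  shows "finite {w \<beta> | w. w \<in> weyl A}"
proof -
  define M where "M = (\<lambda>i j. rat_of_int (d i * A i j))"
  have sym: "M i j = M j i" for i j using assms unfolding M_def cartan_finite_def by metis
  have "pos_def_on M UNIV"
    unfolding M_def using assms
    by (intro pos_def_on_rat_of_int) (simp add: cartan_finite_def rform_def mult.assoc)
  then have fin: "finite {x. (\<forall>i. i \<notin> UNIV \<longrightarrow> x i = 0) \<and>
      quad_form M UNIV (\<lambda>i. of_int (x i)) \<le> of_int (rform A d \<beta> \<beta>)}"
    by (intro finite_int_vectors_quad_form_le sym) simp_all
  have "quad_form M UNIV (\<lambda>i. of_int (x i)) = of_int (rform A d x x)" for x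
    unfolding rform_def quad_form_def M_def by (simp add: mult.assoc)
  then have "{w \<beta> | w. w \<in> weyl A} \<subseteq> {x. (\<forall>i. i \<notin> UNIV \<longrightarrow> x i = 0) \<and>
      quad_form M UNIV (\<lambda>i. of_int (x i)) \<le> of_int (rform A d \<beta> \<beta>)}"
    by (auto simp: weyl_rform[OF assms])
  then show ?thesis using fin by (rule finite_subset)
qed

section \<open>The dominance order\<close>

lemma sum_apply: "(sum f S) x = (\<Sum>a\<in>S. f a x)"
  by (induction S rule: infinite_finite_induct) auto

lemma Qpos_zero: "0 \<in> Qpos A"
  unfolding Qpos_def by (intro CollectI exI[of _ "\<lambda>_. 0"]) (simp add: fun_eq_iff)

lemma Qpos_add:
  assumes "x \<in> Qpos A" "y \<in> Qpos A"
  shows "x + y \<in> Qpos A"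
proof -
  obtain m n where "x = (\<lambda>k. \<Sum>\<alpha>\<in>posroots A. int (m \<alpha>) * \<alpha> k)" "y = (\<lambda>k. \<Sum>\<alpha>\<in>posroots A. int (n \<alpha>) * \<alpha> k)"
    using assms unfolding Qpos_def by blast
  then have "x + y = (\<lambda>k. \<Sum>\<alpha>\<in>posroots A. int (m \<alpha> + n \<alpha>) * \<alpha> k)"
    by (simp add: fun_eq_iff sum.distrib distrib_right)
  then show ?thesis unfolding Qpos_def by (intro CollectI exI[of _ "\<lambda>\<alpha>. m \<alpha> + n \<alpha>"])
qed

lemma Qpos_sum: "finite V \<Longrightarrow> (\<And>v. v \<in> V \<Longrightarrow> f v \<in> Qpos A) \<Longrightarrow> sum f V \<in> Qpos A"
  by (induction V rule: finite_induct) (auto intro: Qpos_zero Qpos_add)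

lemma Qpos_nonneg:
  assumes "\<gamma> \<in> Qpos A"
  shows "0 \<le> \<gamma> k"
proof -
  obtain n where "\<gamma> = (\<lambda>k. \<Sum>\<alpha>\<in>posroots A. int (n \<alpha>) * \<alpha> k)"
    using assms unfolding Qpos_def by blast
  then show ?thesis by (auto intro!: sum_nonneg simp: posroots_def)
qed

lemma Qpos_le_sum:
  assumes "finite V" "\<And>v. v \<in> V \<Longrightarrow> \<gamma> v \<in> Qpos A" "v \<in> V"
  shows "\<gamma> v k \<le> sum \<gamma> V k"
  unfolding sum_apply using assms Qpos_nonneg by (intro member_le_sum) auto

lemma two_rho_Qpos: "two_rho A \<in> Qpos A"
proof -
  have "two_rho A = (\<lambda>k. \<Sum>\<alpha>\<in>posroots A. int 1 * \<alpha> k)"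
    by (simp add: two_rho_def fun_eq_iff sum_apply)
  then show ?thesis unfolding Qpos_def by (intro CollectI exI[of _ "\<lambda>_. 1"])
qed

lemma kostant_nonzero_Qpos:
  fixes A :: "'i::finite \<Rightarrow> 'i \<Rightarrow> int"
  assumes "kostant A \<alpha> \<noteq> 0"
  shows "\<alpha> \<in> Qpos A"
proof -
  have "{n::('i \<Rightarrow> int) \<Rightarrow> nat. (\<forall>\<gamma>. \<gamma> \<notin> posroots A \<longrightarrow> n \<gamma> = 0) \<and>
      (\<lambda>k. \<Sum>\<gamma>\<in>posroots A. int (n \<gamma>) * \<gamma> k) = \<alpha>} \<noteq> {}"
    using assms unfolding kostant_def by (metis card.empty)
  then show ?thesis unfolding Qpos_def by auto
qed

definition dominated_by :: "('i::finite \<Rightarrow> 'i \<Rightarrow> int) \<Rightarrow> ('i \<Rightarrow> int) set \<Rightarrow> ('i \<Rightarrow> int) set" where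
  "dominated_by A F = {\<beta> - \<gamma> | \<beta> \<gamma>. \<beta> \<in> F \<and> \<gamma> \<in> Qpos A}"

lemma mem_dominated_by_iff: "x \<in> dominated_by A F \<longleftrightarrow> (\<exists>\<beta>\<in>F. \<exists>\<gamma>\<in>Qpos A. x = \<beta> - \<gamma>)"
  unfolding dominated_by_def by blast

lemma self_mem_dominated_by: "\<beta> \<in> F \<Longrightarrow> \<beta> \<in> dominated_by A F"
  unfolding dominated_by_def using Qpos_zero by (intro CollectI exI[of _ \<beta>] exI[of _ 0]) simp

lemma dominated_by_choice:
  assumes "\<And>v. v \<in> V \<Longrightarrow> g v \<in> dominated_by A (F v)"
  shows "\<exists>f \<gamma>. \<forall>v\<in>V. f v \<in> F v \<and> \<gamma> v \<in> Qpos A \<and> g v = f v - \<gamma> v"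
proof -
  have "\<forall>v\<in>V. \<exists>p. fst p \<in> F v \<and> snd p \<in> Qpos A \<and> g v = fst p - snd p"
  proof
    fix v assume "v \<in> V"
    then obtain \<beta> \<gamma> where "g v = \<beta> - \<gamma>" "\<beta> \<in> F v" "\<gamma> \<in> Qpos A"
      using assms unfolding dominated_by_def by blast
    then show "\<exists>p. fst p \<in> F v \<and> snd p \<in> Qpos A \<and> g v = fst p - snd p"
      by (intro exI[of _ "(\<beta>, \<gamma>)"]) simp
  qed
  from bchoice[OF this] obtain p
    where "\<forall>v\<in>V. fst (p v) \<in> F v \<and> snd (p v) \<in> Qpos A \<and> g v = fst (p v) - snd (p v)" ..
  then show ?thesis by (intro exI[of _ "\<lambda>v. fst (p v)"] exI[of _ "\<lambda>v. snd (p v)"])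
qed

lemma sum_mem_dominated_by:
  assumes "finite V" "\<And>v. v \<in> V \<Longrightarrow> g v \<in> dominated_by A (F v)"
  shows "sum g V \<in> dominated_by A ((\<lambda>h. sum h V) ` PiE V F)"
proof -
  have "\<exists>f \<gamma>. \<forall>v\<in>V. f v \<in> F v \<and> \<gamma> v \<in> Qpos A \<and> g v = f v - \<gamma> v"
    using assms(2) by (rule dominated_by_choice)
  then obtain f \<gamma> where f: "\<forall>v\<in>V. f v \<in> F v \<and> \<gamma> v \<in> Qpos A \<and> g v = f v - \<gamma> v"
    by (elim exE)
  have "sum g V = sum (\<lambda>v. f v - \<gamma> v) V" using f by (intro sum.cong) auto
  also have "\<dots> = sum f V - sum \<gamma> V" by (rule sum_subtractf)
  finally have "sum g V = sum f V - sum \<gamma> V" .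
  moreover have "sum f V \<in> (\<lambda>h. sum h V) ` PiE V F"
    using f by (intro image_eqI[of _ _ "restrict f V"]) auto
  moreover have "sum \<gamma> V \<in> Qpos A" using assms(1) f by (intro Qpos_sum) auto
  ultimately show ?thesis
    unfolding dominated_by_def by blast
qed


lemma finite_dominated_fibre:
  fixes A :: "'i::finite \<Rightarrow> 'i \<Rightarrow> int" and F :: "'v \<Rightarrow> ('i \<Rightarrow> int) set"
  assumes "finite V" "\<And>v. v \<in> V \<Longrightarrow> finite (F v)"
  shows "finite {g. (\<forall>v\<in>V. g v \<in> dominated_by A (F v)) \<and> (\<forall>v. v \<notin> V \<longrightarrow> g v = 0) \<and> sum g V = \<beta>}"
proof -
  define S where "S = (\<lambda>h. sum h V) ` PiE V F"
  have "finite S" unfolding S_def using assms by (intro finite_imageI finite_PiE) auto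
  define b where "b k = (\<Sum>s\<in>S. \<bar>s k - \<beta> k\<bar>)" for k
  define Box where "Box = {\<gamma>::'i \<Rightarrow> int. \<forall>k. 0 \<le> \<gamma> k \<and> \<gamma> k \<le> b k}"
  have "Box \<subseteq> PiE UNIV (\<lambda>k. {0..b k})" unfolding Box_def by auto
  then have "finite Box" by (rule finite_subset) (intro finite_PiE; simp)
  define H where "H = (\<Union>v\<in>V. (\<lambda>(f, \<gamma>). f - \<gamma>) ` (F v \<times> Box))"
  have "finite H"
    unfolding H_def using assms \<open>finite Box\<close> by (intro finite_UN_I finite_imageI finite_cartesian_product)
  have "{g. (\<forall>v\<in>V. g v \<in> dominated_by A (F v)) \<and> (\<forall>v. v \<notin> V \<longrightarrow> g v = 0) \<and> sum g V = \<beta>}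
      \<subseteq> {g. \<forall>v. (v \<in> V \<longrightarrow> g v \<in> H) \<and> (v \<notin> V \<longrightarrow> g v = 0)}"
  proof
    fix g assume "g \<in> {g. (\<forall>v\<in>V. g v \<in> dominated_by A (F v)) \<and> (\<forall>v. v \<notin> V \<longrightarrow> g v = 0) \<and> sum g V = \<beta>}"
    then have dom: "\<And>v. v \<in> V \<Longrightarrow> g v \<in> dominated_by A (F v)" and zero: "\<forall>v. v \<notin> V \<longrightarrow> g v = 0"
      and sum: "sum g V = \<beta>" by auto
    have "\<exists>f \<gamma>. \<forall>v\<in>V. f v \<in> F v \<and> \<gamma> v \<in> Qpos A \<and> g v = f v - \<gamma> v"
      using dom by (rule dominated_by_choice)
    then obtain f \<gamma> where f: "\<forall>v\<in>V. f v \<in> F v \<and> \<gamma> v \<in> Qpos A \<and> g v = f v - \<gamma> v"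
      by (elim exE)
    have "sum f V \<in> S"
      unfolding S_def using f by (intro image_eqI[of _ _ "restrict f V"]) auto
    have "\<beta> = sum (\<lambda>v. f v - \<gamma> v) V" unfolding sum[symmetric] using f by (intro sum.cong) auto
    then have sum_\<gamma>: "sum \<gamma> V = sum f V - \<beta>" by (simp add: sum_subtractf)
    have gH: "g v \<in> H" if v: "v \<in> V" for v
    proof -
      have "\<gamma> v \<in> Box" unfolding Box_def
      proof (intro CollectI allI conjI)
        fix k
        show "0 \<le> \<gamma> v k" using f v Qpos_nonneg by blast
        have "\<gamma> v k \<le> sum \<gamma> V k" using f v assms(1) by (intro Qpos_le_sum) auto
        also have "\<dots> \<le> \<bar>sum f V k - \<beta> k\<bar>" unfolding sum_\<gamma> by simp
        also have "\<dots> \<le> b k"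
          unfolding b_def using \<open>finite S\<close> \<open>sum f V \<in> S\<close> by (intro member_le_sum) auto
        finally show "\<gamma> v k \<le> b k" .
      qed
      then show ?thesis
        unfolding H_def using f v by (intro UN_I[OF v] image_eqI[of _ _ "(f v, \<gamma> v)"]) auto
    qed
    show "g \<in> {g. \<forall>v. (v \<in> V \<longrightarrow> g v \<in> H) \<and> (v \<notin> V \<longrightarrow> g v = 0)}"
      using gH zero by simp
  qed
  moreover have "finite {g. \<forall>v. (v \<in> V \<longrightarrow> g v \<in> H) \<and> (v \<notin> V \<longrightarrow> g v = 0)}"
    by (intro finite_set_of_finite_funs assms(1) \<open>finite H\<close>)
  ultimately show ?thesis by (rule finite_subset)
qed

section \<open>Supports of the series \<open>K\<^sub>x\<close>, \<open>D\<close> and their powers\<close>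

definition ser_supp :: "(('i \<Rightarrow> int) \<Rightarrow> int) \<Rightarrow> ('i \<Rightarrow> int) set" where
  "ser_supp f = {\<gamma>. f \<gamma> \<noteq> 0}"

lemma ser_supp_ser_one: "ser_supp ser_one = {0}"
  by (auto simp: ser_supp_def ser_one_def)

lemma ser_supp_ser_mult: "ser_supp (ser_mult f g) \<subseteq> (\<lambda>(b, c). b + c) ` (ser_supp f \<times> ser_supp g)"
proof
  fix \<gamma> assume "\<gamma> \<in> ser_supp (ser_mult f g)"
  then obtain p where "p \<in> {(b, c). b + c = \<gamma> \<and> f b \<noteq> 0 \<and> g c \<noteq> 0}"
    unfolding ser_supp_def ser_mult_def by (auto elim: sum.not_neutral_contains_not_neutral)
  then show "\<gamma> \<in> (\<lambda>(b, c). b + c) ` (ser_supp f \<times> ser_supp g)"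
    by (auto simp: ser_supp_def)
qed

lemma ser_supp_ser_pow:
  assumes "0 \<in> S" "\<And>b c. b \<in> S \<Longrightarrow> c \<in> S \<Longrightarrow> b + c \<in> S" "ser_supp f \<subseteq> S"
  shows "ser_supp (ser_pow f m) \<subseteq> S"
proof (induction m)
  case 0
  then show ?case using assms(1) by (simp add: ser_supp_ser_one)
next
  case (Suc m)
  have "ser_supp (ser_pow f (Suc m)) \<subseteq> (\<lambda>(b, c). b + c) ` (ser_supp f \<times> ser_supp (ser_pow f m))"
    by (simp add: ser_supp_ser_mult)
  also have "\<dots> \<subseteq> S" using Suc.IH assms(2,3) by auto
  finally show ?case .
qed

lemma ser_supp_Dser: "ser_supp (Dser A) \<subseteq> {w (two_rho A) | w. w \<in> weyl A}"
proof
  fix \<gamma> assume "\<gamma> \<in> ser_supp (Dser A)"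
  then obtain w where "w \<in> {w \<in> weyl A. w (two_rho A) = \<gamma>}"
    unfolding ser_supp_def Dser_def by (auto elim: sum.not_neutral_contains_not_neutral)
  then show "\<gamma> \<in> {w (two_rho A) | w. w \<in> weyl A}" by blast
qed

lemma finite_ser_supp_Kn_low_degree:
  assumes "cartan_finite A d" "n \<le> 2"
  shows "finite (ser_supp (Kn A x n))"
proof -
  have orbit: "finite (ser_supp (Dser A))"
    using finite_weyl_orbit[OF assms(1)] ser_supp_Dser by (rule finite_subset[rotated])
  have "n = 0 \<or> n = 1 \<or> n = 2" using assms(2) by auto
  then show ?thesis
  proof (elim disjE)
    assume "n = 0"
    then show ?thesis using orbit ser_supp_ser_mult[of "Dser A" "Dser A"]
      by (simp add: Kn_def) (meson finite_SigmaI finite_imageI finite_subset)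
  qed (simp_all add: Kn_def orbit ser_supp_ser_one)
qed

lemma ser_supp_Kser:
  assumes "x \<in> weyl A"
  shows "ser_supp (Kser A x) \<subseteq> (\<lambda>\<alpha>. x (- \<alpha>)) ` Qpos A"
proof
  fix \<gamma> assume "\<gamma> \<in> ser_supp (Kser A x)"
  then obtain \<alpha> where \<alpha>: "\<alpha> \<in> {\<alpha>. - x (\<lambda>k. two_rho A k + 2 * \<alpha> k) = \<gamma>}" "int (kostant A \<alpha>) \<noteq> 0"
    unfolding ser_supp_def Kser_def by (auto elim: sum.not_neutral_contains_not_neutral)
  have "(\<lambda>k. two_rho A k + 2 * \<alpha> k) = two_rho A + \<alpha> + \<alpha>" by (simp add: fun_eq_iff)
  then have "- x (two_rho A + \<alpha> + \<alpha>) = \<gamma>" using \<alpha>(1) by simp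
  then have "\<gamma> = x (- (two_rho A + \<alpha> + \<alpha>))" unfolding weyl_uminus[OF assms] by simp
  moreover have "two_rho A + \<alpha> + \<alpha> \<in> Qpos A"
    using \<alpha>(2) by (intro Qpos_add two_rho_Qpos kostant_nonzero_Qpos) auto
  ultimately show "\<gamma> \<in> (\<lambda>\<alpha>. x (- \<alpha>)) ` Qpos A" by blast
qed

lemma ser_supp_Kn_high_degree:
  assumes "x \<in> weyl A" "2 < n"
  shows "ser_supp (Kn A x n) \<subseteq> (\<lambda>\<alpha>. x (- \<alpha>)) ` Qpos A"
proof -
  have "ser_supp (ser_pow (Kser A x) (n - 2)) \<subseteq> (\<lambda>\<alpha>. x (- \<alpha>)) ` Qpos A"
  proof (rule ser_supp_ser_pow)
    show "0 \<in> (\<lambda>\<alpha>. x (- \<alpha>)) ` Qpos A"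
      using Qpos_zero weyl_zero[OF assms(1)] by (intro image_eqI[of _ _ 0]) auto
    show "b + c \<in> (\<lambda>\<alpha>. x (- \<alpha>)) ` Qpos A"
      if bc: "b \<in> (\<lambda>\<alpha>. x (- \<alpha>)) ` Qpos A" "c \<in> (\<lambda>\<alpha>. x (- \<alpha>)) ` Qpos A" for b c
    proof -
      obtain \<alpha> \<alpha>' where "\<alpha> \<in> Qpos A" "\<alpha>' \<in> Qpos A" "b = x (- \<alpha>)" "c = x (- \<alpha>')"
        using bc by blast
      moreover have "x (- (\<alpha> + \<alpha>')) = x (- \<alpha>) + x (- \<alpha>')"
        unfolding minus_add_distrib by (rule weyl_add[OF assms(1)])
      ultimately show ?thesis by (intro image_eqI[of _ _ "\<alpha> + \<alpha>'"] Qpos_add) auto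
    qed
  qed (rule ser_supp_Kser[OF assms(1)])
  then show ?thesis using assms(2) by (simp add: Kn_def)
qed

text \<open>Below, the inverse of a function is written \<open>inv_into UNIV\<close>: plain \<open>inv\<close> parses as the
  group inverse of HOL-Algebra, which is imported along with Jordan_Normal_Form.\<close>

lemma Kn_support_dominated:
  assumes "cartan_finite A d" "x \<in> weyl A"
  shows "\<exists>F. finite F \<and> (\<forall>\<gamma>\<in>ser_supp (Kn A x n). inv_into UNIV x \<gamma> \<in> dominated_by A F)"
proof (cases "n \<le> 2")
  case True
  then show ?thesis using finite_ser_supp_Kn_low_degree[OF assms(1) True]
    by (intro exI[of _ "inv_into UNIV x ` ser_supp (Kn A x n)"]) (auto intro: self_mem_dominated_by)
next
  case False
  have "inj x" using weyl_bij[OF assms] by (rule bij_is_inj)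
  have "inv_into UNIV x \<gamma> \<in> dominated_by A {0}" if \<gamma>: "\<gamma> \<in> ser_supp (Kn A x n)" for \<gamma>
  proof -
    have "\<gamma> \<in> (\<lambda>\<alpha>. x (- \<alpha>)) ` Qpos A"
      using \<gamma> ser_supp_Kn_high_degree[OF assms(2), of n] False by auto
    then obtain \<alpha> where "\<alpha> \<in> Qpos A" "\<gamma> = x (- \<alpha>)" by blast
    then show ?thesis unfolding dominated_by_def using inv_f_f[OF \<open>inj x\<close>]
      by (intro CollectI exI[of _ 0] exI[of _ \<alpha>]) simp
  qed
  then show ?thesis by blast
qed

section \<open>The inverse of the framing matrix and the pairing on the coset\<close>

lemma det_on_eq_det_mat:
  fixes B :: "nat \<Rightarrow> nat \<Rightarrow> int"
  assumes f: "bij_betw f {0..<n} V"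
  shows "rat_of_int (det_on V B) = det (mat n n (\<lambda>(i, j). rat_of_int (B (f i) (f j))))"
proof -
  define f' where "f' = inv_into {0..<n} f"
  have f'f: "\<And>i. i \<in> {0..<n} \<Longrightarrow> f' (f i) = i"
    unfolding f'_def using f bij_betw_inv_into_left by fast
  have fV: "\<And>i. i < n \<Longrightarrow> f i \<in> V" using f by (auto dest: bij_betwE)
  define \<Phi> where "\<Phi> = (\<lambda>\<pi> x. if x \<in> V then f (\<pi> (f' x)) else x)"
  have \<Phi>: "bij_betw \<Phi> {\<pi>. \<pi> permutes {0..<n}} {\<pi>. \<pi> permutes V}"
    unfolding \<Phi>_def f'_def by (rule bij_betw_permutations[OF f])
  have "det_on V B = (\<Sum>q\<in>{\<pi>. \<pi> permutes {0..<n}}. sign (\<Phi> q) * (\<Prod>v\<in>V. B v (\<Phi> q v)))"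
    unfolding det_on_def by (rule sum.reindex_bij_betw[OF \<Phi>, symmetric])
  also have "\<dots> = (\<Sum>q\<in>{\<pi>. \<pi> permutes {0..<n}}. sign q * (\<Prod>i\<in>{0..<n}. B (f i) (f (q i))))"
  proof (intro sum.cong refl)
    fix q assume q: "q \<in> {\<pi>. \<pi> permutes {0..<n}}"
    have "permutes_bij_finite q {0..<n} V f f'"
      unfolding permutes_bij_finite_def permutes_bij_finite_axioms_def permutes_bij_def
      using q f f'f by auto
    then have "sign (\<Phi> q) = sign q"
      using permutes_bij_finite.sign_p' unfolding \<Phi>_def by fastforce
    moreover have "(\<Prod>v\<in>V. B v (\<Phi> q v)) = (\<Prod>i\<in>{0..<n}. B (f i) (\<Phi> q (f i)))"
      by (rule prod.reindex_bij_betw[OF f, symmetric])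
    moreover have "\<dots> = (\<Prod>i\<in>{0..<n}. B (f i) (f (q i)))"
      using f'f fV unfolding \<Phi>_def by (intro prod.cong refl) auto
    ultimately show "sign (\<Phi> q) * (\<Prod>v\<in>V. B v (\<Phi> q v)) = sign q * (\<Prod>i\<in>{0..<n}. B (f i) (f (q i)))"
      by simp
  qed
  finally have "rat_of_int (det_on V B) = (\<Sum>q\<in>{\<pi>. \<pi> permutes {0..<n}}.
      of_int (sign q) * (\<Prod>i\<in>{0..<n}. rat_of_int (B (f i) (f (q i)))))"
    by simp
  also have "\<dots> = det (mat n n (\<lambda>(i, j). rat_of_int (B (f i) (f j))))"
    unfolding det_def'[OF mat_carrier]
  proof (intro sum.cong refl)
    fix q assume "q \<in> {\<pi>. \<pi> permutes {0..<n}}"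
    then have "\<And>i. i \<in> {0..<n} \<Longrightarrow> q i < n" using permutes_in_image by fastforce
    then show "of_int (sign q) * (\<Prod>i\<in>{0..<n}. rat_of_int (B (f i) (f (q i))))
      = of_int (sign q) * (\<Prod>i = 0..<n. mat n n (\<lambda>(i, j). rat_of_int (B (f i) (f j))) $$ (i, q i))"
      by (intro arg_cong2[where f = "(*)"] refl prod.cong) auto
  qed
  finally show ?thesis .
qed


lemma sum_bij_betw_mat_mult:
  assumes f: "bij_betw f {0..<n} V" and "X \<in> carrier_mat n n" "Y \<in> carrier_mat n n" "i < n" "j < n"
  shows "(\<Sum>w\<in>V. X $$ (i, inv_into {0..<n} f w) * Y $$ (inv_into {0..<n} f w, j)) = (X * Y) $$ (i, j)"
proof -
  have "(\<Sum>w\<in>V. X $$ (i, inv_into {0..<n} f w) * Y $$ (inv_into {0..<n} f w, j))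
      = (\<Sum>k\<in>{0..<n}. X $$ (i, inv_into {0..<n} f (f k)) * Y $$ (inv_into {0..<n} f (f k), j))"
    by (rule sum.reindex_bij_betw[OF f, symmetric])
  also have "\<dots> = (\<Sum>k\<in>{0..<n}. X $$ (i, k) * Y $$ (k, j))"
    using f bij_betw_inv_into_left by (intro sum.cong refl) fastforce
  finally show ?thesis using assms(2-5) by (simp add: scalar_prod_def)
qed

lemma det_on_nonzero_inverse:
  fixes B :: "nat \<Rightarrow> nat \<Rightarrow> int"
  assumes "finite V" "det_on V B \<noteq> 0"
  shows "\<exists>N :: nat \<Rightarrow> nat \<Rightarrow> rat.
    (\<forall>u\<in>V. \<forall>v\<in>V. (\<Sum>w\<in>V. of_int (B u w) * N w v) = (if u = v then 1 else 0)) \<and>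
    (\<forall>u\<in>V. \<forall>v\<in>V. (\<Sum>w\<in>V. N u w * of_int (B w v)) = (if u = v then 1 else 0)) \<and>
    (\<forall>u v. u \<notin> V \<or> v \<notin> V \<longrightarrow> N u v = 0)"
proof -
  define n where "n = card V"
  obtain f where f: "bij_betw f {0..<n} V" using ex_bij_betw_nat_finite[OF assms(1)] n_def by blast
  define g where "g = inv_into {0..<n} f"
  have fg: "\<And>u. u \<in> V \<Longrightarrow> f (g u) = u" unfolding g_def using f bij_betw_inv_into_right by fast
  have g: "\<And>u. u \<in> V \<Longrightarrow> g u < n"
    using bij_betw_inv_into[OF f] unfolding g_def by (auto dest: bij_betwE)
  have g_eq: "\<And>u v. u \<in> V \<Longrightarrow> v \<in> V \<Longrightarrow> g u = g v \<longleftrightarrow> u = v" using fg by metis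
  define Bm where "Bm = mat n n (\<lambda>(i, j). rat_of_int (B (f i) (f j)))"
  have Bm: "Bm \<in> carrier_mat n n" and Bm_B: "\<And>u w. u \<in> V \<Longrightarrow> w \<in> V \<Longrightarrow> Bm $$ (g u, g w) = of_int (B u w)"
    unfolding Bm_def using g fg by auto
  have "det Bm \<noteq> 0" using det_on_eq_det_mat[OF f, of B] assms(2) unfolding Bm_def by simp
  define Cm where "Cm = adj_mat Bm"
  have Cm: "Cm \<in> carrier_mat n n" and "Bm * Cm = det Bm \<cdot>\<^sub>m 1\<^sub>m n" "Cm * Bm = det Bm \<cdot>\<^sub>m 1\<^sub>m n"
    using adj_mat[OF Bm] unfolding Cm_def by auto
  define N where "N = (\<lambda>u v. if u \<in> V \<and> v \<in> V then Cm $$ (g u, g v) / det Bm else 0)"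
  have "(\<Sum>w\<in>V. of_int (B u w) * N w v) = (if u = v then 1 else 0) \<and>
    (\<Sum>w\<in>V. N u w * of_int (B w v)) = (if u = v then 1 else 0)" if uv: "u \<in> V" "v \<in> V" for u v
  proof
    have "(\<Sum>w\<in>V. of_int (B u w) * N w v) = (\<Sum>w\<in>V. Bm $$ (g u, g w) * Cm $$ (g w, g v)) / det Bm"
      unfolding sum_divide_distrib using uv by (intro sum.cong refl) (simp add: N_def Bm_B)
    also have "\<dots> = (Bm * Cm) $$ (g u, g v) / det Bm"
      using sum_bij_betw_mat_mult[OF f Bm Cm g g] uv unfolding g_def by simp
    finally show "(\<Sum>w\<in>V. of_int (B u w) * N w v) = (if u = v then 1 else 0)"
      using \<open>Bm * Cm = _\<close> \<open>det Bm \<noteq> 0\<close> uv g g_eq by simp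
    have "(\<Sum>w\<in>V. N u w * of_int (B w v)) = (\<Sum>w\<in>V. Cm $$ (g u, g w) * Bm $$ (g w, g v)) / det Bm"
      unfolding sum_divide_distrib using uv by (intro sum.cong refl) (simp add: N_def Bm_B)
    also have "\<dots> = (Cm * Bm) $$ (g u, g v) / det Bm"
      using sum_bij_betw_mat_mult[OF f Cm Bm g g] uv unfolding g_def by simp
    finally show "(\<Sum>w\<in>V. N u w * of_int (B w v)) = (if u = v then 1 else 0)"
      using \<open>Cm * Bm = _\<close> \<open>det Bm \<noteq> 0\<close> uv g g_eq by simp
  qed
  then show ?thesis by (intro exI[of _ N]) (auto simp: N_def)
qed


lemma right_inverse_eq_left_inverse:
  fixes B :: "nat \<Rightarrow> nat \<Rightarrow> int" and M N :: "nat \<Rightarrow> nat \<Rightarrow> rat"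
  assumes "finite V"
    and M: "\<And>u v. u \<in> V \<Longrightarrow> v \<in> V \<Longrightarrow> (\<Sum>w\<in>V. of_int (B u w) * M w v) = (if u = v then 1 else 0)"
    and N: "\<And>u v. u \<in> V \<Longrightarrow> v \<in> V \<Longrightarrow> (\<Sum>w\<in>V. N u w * of_int (B w v)) = (if u = v then 1 else 0)"
    and "u \<in> V" "v \<in> V"
  shows "M u v = N u v"
proof -
  have "N u v = (\<Sum>z\<in>V. N u z * (if z = v then 1 else 0))"
    using assms(1,5) by (simp add: if_distrib sum.delta cong: if_cong)
  also have "\<dots> = (\<Sum>z\<in>V. \<Sum>w\<in>V. N u z * of_int (B z w) * M w v)"
    using M \<open>v \<in> V\<close> by (intro sum.cong refl) (simp add: mult.assoc flip: sum_distrib_left)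
  also have "\<dots> = (\<Sum>w\<in>V. (\<Sum>z\<in>V. N u z * of_int (B z w)) * M w v)"
    by (subst sum.swap) (simp add: sum_distrib_right)
  also have "\<dots> = (\<Sum>w\<in>V. if u = w then M w v else 0)"
    using N \<open>u \<in> V\<close> by (intro sum.cong refl) simp
  also have "\<dots> = M u v"
    using assms(1,4) by (simp add: sum.delta)
  finally show ?thesis by simp
qed

lemma Binv_inverse:
  assumes "finite (pV G)" "det_on (pV G) (framing G) \<noteq> 0" "u \<in> pV G" "v \<in> pV G"
  shows "(\<Sum>w\<in>pV G. of_int (framing G u w) * Binv G w v) = (if u = v then 1 else 0)"
    and "(\<Sum>w\<in>pV G. Binv G u w * of_int (framing G w v)) = (if u = v then 1 else 0)"
proof -
  obtain N :: "nat \<Rightarrow> nat \<Rightarrow> rat" where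
    N1: "\<forall>u\<in>pV G. \<forall>v\<in>pV G. (\<Sum>w\<in>pV G. of_int (framing G u w) * N w v) = (if u = v then 1 else 0)"
    and N2: "\<forall>u\<in>pV G. \<forall>v\<in>pV G. (\<Sum>w\<in>pV G. N u w * of_int (framing G w v)) = (if u = v then 1 else 0)"
    and N3: "\<forall>u v. u \<notin> pV G \<or> v \<notin> pV G \<longrightarrow> N u v = 0"
    using det_on_nonzero_inverse[OF assms(1,2)] by blast
  have "Binv G = N" unfolding Binv_def
  proof (rule the_equality)
    fix M :: "nat \<Rightarrow> nat \<Rightarrow> rat" assume M: "(\<forall>u\<in>pV G. \<forall>v\<in>pV G. (\<Sum>w\<in>pV G. of_int (framing G u w) * M w v) = (if u = v then 1 else 0))
      \<and> (\<forall>u v. u \<notin> pV G \<or> v \<notin> pV G \<longrightarrow> M u v = 0)"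
    then have M1: "\<And>u v. u \<in> pV G \<Longrightarrow> v \<in> pV G \<Longrightarrow>
        (\<Sum>w\<in>pV G. of_int (framing G u w) * M w v) = (if u = v then 1 else 0)"
      and M0: "\<And>u v. u \<notin> pV G \<or> v \<notin> pV G \<Longrightarrow> M u v = 0" by blast+
    have N2': "\<And>u v. u \<in> pV G \<Longrightarrow> v \<in> pV G \<Longrightarrow>
        (\<Sum>w\<in>pV G. N u w * of_int (framing G w v)) = (if u = v then 1 else 0)"
      using N2 by blast
    show "M = N"
    proof (intro ext)
      fix u v
      show "M u v = N u v"
      proof (cases "u \<in> pV G \<and> v \<in> pV G")
        case True
        then show ?thesis by (intro right_inverse_eq_left_inverse[OF assms(1) M1 N2']) simp_all
      next
        case False
        then show ?thesis using M0 N3 by simp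
      qed
    qed
  qed (use N1 N3 in blast)
  then show "(\<Sum>w\<in>pV G. of_int (framing G u w) * Binv G w v) = (if u = v then 1 else 0)"
    and "(\<Sum>w\<in>pV G. Binv G u w * of_int (framing G w v)) = (if u = v then 1 else 0)"
    using N1 N2 assms(3,4) by simp_all
qed


definition framing_apply :: "pgraph \<Rightarrow> (nat \<Rightarrow> 'i \<Rightarrow> int) \<Rightarrow> nat \<Rightarrow> 'i \<Rightarrow> int" where
  "framing_apply G x v = (\<lambda>k. \<Sum>v'\<in>pV G. framing G v v' * x v' k)"

lemma lpair_framing_apply_right:
  assumes "finite (pV G)" "det_on (pV G) (framing G) \<noteq> 0"
  shows "lpair A d G p (framing_apply G x) = of_int (\<Sum>u\<in>pV G. rform A d (p u) (x u))"
proof -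
  let ?V = "pV G" and ?R = "\<lambda>u w. rat_of_int (rform A d (p u) (x w))"
  have "lpair A d G p (framing_apply G x)
      = (\<Sum>u\<in>?V. \<Sum>v\<in>?V. Binv G u v * (\<Sum>w\<in>?V. of_int (framing G v w) * ?R u w))"
    unfolding lpair_def framing_apply_def using assms(1) by (simp add: rform_sum_right)
  also have "\<dots> = (\<Sum>u\<in>?V. \<Sum>w\<in>?V. (\<Sum>v\<in>?V. Binv G u v * of_int (framing G v w)) * ?R u w)"
    by (rule sum.cong[OF refl], simp only: sum_distrib_left sum_distrib_right mult.assoc) (rule sum.swap)
  also have "\<dots> = (\<Sum>u\<in>?V. \<Sum>w\<in>?V. if u = w then ?R u w else 0)"
    using Binv_inverse(2)[OF assms] by (intro sum.cong refl) simp
  also have "\<dots> = of_int (\<Sum>u\<in>?V. rform A d (p u) (x u))"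
    using assms(1) by (simp add: sum.delta)
  finally show ?thesis .
qed

lemma lpair_framing_apply_left:
  assumes "wf_pg G" "det_on (pV G) (framing G) \<noteq> 0"
  shows "lpair A d G (framing_apply G x) p = of_int (\<Sum>u\<in>pV G. rform A d (x u) (p u))"
proof -
  let ?V = "pV G" and ?R = "\<lambda>w v. rat_of_int (rform A d (x w) (p v))"
  have fin: "finite ?V" using assms(1) by (simp add: wf_pg_def)
  have sym: "framing G u w = framing G w u" for u w
    using assms(1) unfolding framing_def wf_pg_def by auto
  have "lpair A d G (framing_apply G x) p
      = (\<Sum>u\<in>?V. \<Sum>v\<in>?V. Binv G u v * (\<Sum>w\<in>?V. of_int (framing G u w) * ?R w v))"
    unfolding lpair_def framing_apply_def using fin by (simp add: rform_sum_left)
  also have "\<dots> = (\<Sum>v\<in>?V. \<Sum>u\<in>?V. Binv G u v * (\<Sum>w\<in>?V. of_int (framing G w u) * ?R w v))"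
    by (subst sum.swap) (simp only: sym)
  also have "\<dots> = (\<Sum>v\<in>?V. \<Sum>w\<in>?V. (\<Sum>u\<in>?V. of_int (framing G w u) * Binv G u v) * ?R w v)"
    by (rule sum.cong[OF refl], simp only: sum_distrib_left sum_distrib_right mult_ac) (rule sum.swap)
  also have "\<dots> = (\<Sum>v\<in>?V. \<Sum>w\<in>?V. if w = v then ?R w v else 0)"
    using Binv_inverse(1)[OF fin assms(2)] by (intro sum.cong refl) simp
  also have "\<dots> = of_int (\<Sum>u\<in>?V. rform A d (x u) (p u))"
    using fin by (simp add: sum.delta')
  finally show ?thesis .
qed


lemma lpair_expand:
  assumes "\<forall>v\<in>pV G. l v = (\<lambda>k. a v k + 2 * y v k)"
  shows "lpair A d G l l
    = lpair A d G a a + 2 * lpair A d G a y + 2 * lpair A d G y a + 4 * lpair A d G y y"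
proof -
  have "rform A d (l u) (l v) = rform A d (a u) (a v) + 2 * rform A d (a u) (y v)
      + 2 * rform A d (y u) (a v) + 4 * rform A d (y u) (y v)" if "u \<in> pV G" "v \<in> pV G" for u v
  proof -
    have "l w = a w + (\<lambda>k. 2 * y w k)" if "w \<in> pV G" for w using assms that by auto
    then show ?thesis using that
      by (simp add: rform_add_left rform_add_right rform_scale_left rform_scale_right)
  qed
  then show ?thesis
    unfolding lpair_def
    by (simp add: sum.distrib sum_distrib_left algebra_simps cong: sum.cong)
qed

lemma lpair_lcoset_mod4:
  assumes "cartan_finite A d" "wf_pg G" "det_on (pV G) (framing G) \<noteq> 0" "l \<in> lcoset G a"
  shows "\<exists>z::int. lpair A d G l l = lpair A d G a a + 4 * of_int z"
proof -
  have fin: "finite (pV G)" using assms(2) by (simp add: wf_pg_def)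
  obtain x where "\<forall>v\<in>pV G. l v = (\<lambda>k. a v k + 2 * (\<Sum>v'\<in>pV G. framing G v v' * x v' k))"
    using assms(4) unfolding lcoset_def by blast
  then have "\<forall>v\<in>pV G. l v = (\<lambda>k. a v k + 2 * framing_apply G x v k)"
    by (simp add: framing_apply_def)
  then have "lpair A d G l l = lpair A d G a a + 2 * lpair A d G a (framing_apply G x)
      + 2 * lpair A d G (framing_apply G x) a + 4 * lpair A d G (framing_apply G x) (framing_apply G x)"
    by (rule lpair_expand)
  also have "\<dots> = lpair A d G a a + 4 * of_int ((\<Sum>u\<in>pV G. rform A d (a u) (x u))
      + (\<Sum>u\<in>pV G. rform A d (framing_apply G x u) (x u)))"
    using rform_sym[OF assms(1)]
    by (simp add: lpair_framing_apply_right[OF fin assms(3)] lpair_framing_apply_left[OF assms(2,3)])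
  finally show ?thesis by blast
qed

section \<open>Well-definedness of \<open>Y\<^sub>\<tau>\<close>\<close>

lemma finite_dominated_fibre_inj:
  fixes A :: "'i::finite \<Rightarrow> 'i \<Rightarrow> int" and h :: "'v \<Rightarrow> ('i \<Rightarrow> int) \<Rightarrow> 'i \<Rightarrow> int"
  assumes "finite V" "\<And>v. v \<in> V \<Longrightarrow> finite (F v)" "\<And>v. v \<in> V \<Longrightarrow> inj (h v)"
  shows "finite {l. (\<forall>v\<in>V. h v (l v) \<in> dominated_by A (F v)) \<and> (\<forall>v. v \<notin> V \<longrightarrow> l v = 0)
    \<and> (\<Sum>v\<in>V. h v (l v)) = \<beta>}" (is "finite ?L")
proof (rule finite_imageD)
  let ?\<phi> = "\<lambda>l v. if v \<in> V then h v (l v) else 0"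
  have "?\<phi> ` ?L \<subseteq> {g. (\<forall>v\<in>V. g v \<in> dominated_by A (F v)) \<and> (\<forall>v. v \<notin> V \<longrightarrow> g v = 0) \<and> sum g V = \<beta>}"
    by auto
  then show "finite (?\<phi> ` ?L)"
    by (rule finite_subset) (rule finite_dominated_fibre[OF assms(1,2)])
  show "inj_on ?\<phi> ?L"
  proof (rule inj_onI)
    fix l l' assume l: "l \<in> ?L" and l': "l' \<in> ?L" and eq: "?\<phi> l = ?\<phi> l'"
    show "l = l'"
    proof
      fix v show "l v = l' v"
      proof (cases "v \<in> V")
        case True
        then have "h v (l v) = h v (l' v)" using fun_cong[OF eq, of v] by simp
        then show ?thesis by (rule injD[OF assms(3)[OF True]])
      qed (use l l' in auto)
    qed
  qed
qed

lemma Ycoeff_in_Yring: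
  assumes "finite S"
    and bounded: "\<forall>l\<in>lcoset G a. cGx A G \<xi> l \<noteq> 0 \<longrightarrow> xiinv G \<xi> l \<in> dominated_by A S"
    and fibres: "\<And>\<beta>. finite {l \<in> lcoset G a. cGx A G \<xi> l \<noteq> 0 \<and> xiinv G \<xi> l = \<beta>}"
    and mod4: "\<And>l. l \<in> lcoset G a \<Longrightarrow> \<exists>z::int. lpair A d G l l = lpair A d G a a + 4 * of_int z"
  shows "in_Yring A (Yexp0 A d G - lpair A d G a a / 8) (Ycoeff A d G a \<xi>)"
proof -
  let ?L = "\<lambda>\<beta> e. {l \<in> lcoset G a. cGx A G \<xi> l \<noteq> 0 \<and> xiinv G \<xi> l = \<beta> \<and>
    Yexp0 A d G - lpair A d G l l / 8 = e}"
  have contributes: "?L \<beta> e \<noteq> {}" if "Ycoeff A d G a \<xi> \<beta> e \<noteq> 0" for \<beta> e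
    using that unfolding Ycoeff_def by (auto elim: sum.not_neutral_contains_not_neutral)
  have cones: "\<exists>\<beta>0\<in>S. \<beta>0 - \<beta> \<in> Qpos A" if nz: "Ycoeff A d G a \<xi> \<beta> e \<noteq> 0" for \<beta> e
  proof -
    obtain l where "l \<in> ?L \<beta> e" using contributes[OF nz] by blast
    then have "\<beta> \<in> dominated_by A S" using bounded by auto
    then obtain \<beta>0 \<gamma> where "\<beta> = \<beta>0 - \<gamma>" "\<beta>0 \<in> S" "\<gamma> \<in> Qpos A"
      unfolding mem_dominated_by_iff by blast
    then show ?thesis by (intro bexI[of _ \<beta>0]) simp_all
  qed
  have exponents: "finite {e. Ycoeff A d G a \<xi> \<beta> e \<noteq> 0}" for \<beta>
  proof -
    have "{e. Ycoeff A d G a \<xi> \<beta> e \<noteq> 0} \<subseteq> (\<lambda>l. Yexp0 A d G - lpair A d G l l / 8) `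
        {l \<in> lcoset G a. cGx A G \<xi> l \<noteq> 0 \<and> xiinv G \<xi> l = \<beta>}"
      using contributes by blast
    then show ?thesis using fibres finite_surj by blast
  qed
  have half_integral: "2 * (e - (Yexp0 A d G - lpair A d G a a / 8)) \<in> \<int>"
    if nz: "Ycoeff A d G a \<xi> \<beta> e \<noteq> 0" for \<beta> e
  proof -
    obtain l where l: "l \<in> ?L \<beta> e" using contributes[OF nz] by blast
    then obtain z where z: "lpair A d G l l = lpair A d G a a + 4 * of_int z" using mod4 by blast
    have e: "e = Yexp0 A d G - lpair A d G l l / 8" using l by simp
    have "2 * (e - (Yexp0 A d G - lpair A d G a a / 8)) = of_int (- z)"
      unfolding e z by (simp add: field_simps)
    then show ?thesis by (metis Ints_of_int)
  qed
  show ?thesis unfolding in_Yring_def using assms(1) cones exponents half_integral by blast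
qed


lemma lcoset_zero_outside: "l \<in> lcoset G a \<Longrightarrow> v \<notin> pV G \<Longrightarrow> l v = 0"
  by (simp add: lcoset_def)

lemma cGx_nonzero_factor:
  "finite (pV G) \<Longrightarrow> cGx A G \<xi> l \<noteq> 0 \<Longrightarrow> v \<in> pV G \<Longrightarrow> l v \<in> ser_supp (Kn A (\<xi> v) (pdeg G v))"
  by (simp add: cGx_def ser_supp_def prod_zero_iff)

lemma cGx_support_dominated:
  assumes "cartan_finite A d" "finite (pV G)" "\<forall>v\<in>pV G. \<xi> v \<in> weyl A"
  shows "\<exists>F. (\<forall>v\<in>pV G. finite (F v)) \<and> (\<forall>l. cGx A G \<xi> l \<noteq> 0 \<longrightarrow>
    (\<forall>v\<in>pV G. inv_into UNIV (\<xi> v) (l v) \<in> dominated_by A (F v)))"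
proof -
  have "\<forall>v\<in>pV G. \<exists>F. finite F \<and>
      (\<forall>\<gamma>\<in>ser_supp (Kn A (\<xi> v) (pdeg G v)). inv_into UNIV (\<xi> v) \<gamma> \<in> dominated_by A F)"
    using Kn_support_dominated[OF assms(1)] assms(3) by blast
  from bchoice[OF this] obtain F where "\<forall>v\<in>pV G. finite (F v) \<and>
      (\<forall>\<gamma>\<in>ser_supp (Kn A (\<xi> v) (pdeg G v)). inv_into UNIV (\<xi> v) \<gamma> \<in> dominated_by A (F v))" ..
  then show ?thesis using cGx_nonzero_factor[OF assms(2)] by (intro exI[of _ F]) blast
qed

lemma finite_cGx_fibre:
  assumes "finite (pV G)" "\<forall>v\<in>pV G. bij (\<xi> v)" "\<forall>v\<in>pV G. finite (F v)"
    and dom: "\<forall>l. cGx A G \<xi> l \<noteq> 0 \<longrightarrow> (\<forall>v\<in>pV G. inv_into UNIV (\<xi> v) (l v) \<in> dominated_by A (F v))"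
  shows "finite {l \<in> lcoset G a. cGx A G \<xi> l \<noteq> 0 \<and> xiinv G \<xi> l = \<beta>}"
proof (rule finite_subset)
  let ?L = "{l. (\<forall>v\<in>pV G. inv_into UNIV (\<xi> v) (l v) \<in> dominated_by A (F v))
    \<and> (\<forall>v. v \<notin> pV G \<longrightarrow> l v = 0) \<and> (\<Sum>v\<in>pV G. inv_into UNIV (\<xi> v) (l v)) = \<beta>}"
  show "{l \<in> lcoset G a. cGx A G \<xi> l \<noteq> 0 \<and> xiinv G \<xi> l = \<beta>} \<subseteq> ?L"
  proof
    fix l assume "l \<in> {l \<in> lcoset G a. cGx A G \<xi> l \<noteq> 0 \<and> xiinv G \<xi> l = \<beta>}"
    then have l: "l \<in> lcoset G a" "cGx A G \<xi> l \<noteq> 0" "xiinv G \<xi> l = \<beta>" by auto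
    show "l \<in> ?L" using dom l(2) lcoset_zero_outside[OF l(1)] l(3) by (simp add: xiinv_def)
  qed
  show "finite ?L"
    using assms(2,3) by (intro finite_dominated_fibre_inj assms(1)) (simp_all add: bij_is_inj bij_imp_bij_inv)
qed

theorem lemma4p1:
  fixes A :: "'i::finite \<Rightarrow> 'i \<Rightarrow> int" and d :: "'i \<Rightarrow> int"
    and G :: pgraph and a :: "nat \<Rightarrow> ('i \<Rightarrow> int)"
    and \<xi> :: "nat \<Rightarrow> (('i \<Rightarrow> int) \<Rightarrow> ('i \<Rightarrow> int))"
  assumes "cartan_finite A d"
    and "is_tree G"
    and "reduced G"
    and "det_on (pV G) (framing G) \<noteq> 0"
    and "\<exists>y::nat \<Rightarrow> ('i \<Rightarrow> int). \<forall>v\<in>pV G. a v = (\<lambda>k. delta_vec A G v k + 2 * y v k)"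
    and "weyl_assignment A G \<xi>"
  shows "(\<exists>S. finite S \<and>
            (\<forall>l\<in>lcoset G a. cGx A G \<xi> l \<noteq> 0 \<longrightarrow>
               (\<exists>\<beta>\<in>S. \<exists>\<gamma>\<in>Qpos A. xiinv G \<xi> l = \<beta> - \<gamma>)))
       \<and> (\<forall>\<beta>. finite {l \<in> lcoset G a. cGx A G \<xi> l \<noteq> 0 \<and> xiinv G \<xi> l = \<beta>})
       \<and> in_Yring A (Yexp0 A d G - lpair A d G a a / 8) (Ycoeff A d G a \<xi>)"
proof -
  have wf: "wf_pg G" using assms(2) by (simp add: is_tree_def)
  then have fin: "finite (pV G)" by (simp add: wf_pg_def)
  have weyl: "\<forall>v\<in>pV G. \<xi> v \<in> weyl A" using assms(6) by (simp add: weyl_assignment_def)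
  obtain F where F: "\<forall>v\<in>pV G. finite (F v)" and dom: "\<forall>l. cGx A G \<xi> l \<noteq> 0 \<longrightarrow>
      (\<forall>v\<in>pV G. inv_into UNIV (\<xi> v) (l v) \<in> dominated_by A (F v))"
    using cGx_support_dominated[OF assms(1) fin weyl] by blast
  define S where "S = (\<lambda>h. sum h (pV G)) ` PiE (pV G) F"
  have "finite S" unfolding S_def using fin F by (intro finite_imageI finite_PiE) auto
  have bounded: "\<forall>l\<in>lcoset G a. cGx A G \<xi> l \<noteq> 0 \<longrightarrow> xiinv G \<xi> l \<in> dominated_by A S"
    unfolding xiinv_def S_def using dom fin by (auto intro: sum_mem_dominated_by)
  have fibres: "finite {l \<in> lcoset G a. cGx A G \<xi> l \<noteq> 0 \<and> xiinv G \<xi> l = \<beta>}" for \<beta>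
    using weyl weyl_bij[OF assms(1)] by (intro finite_cGx_fibre[OF fin _ F dom]) blast
  have "\<forall>l\<in>lcoset G a. cGx A G \<xi> l \<noteq> 0 \<longrightarrow> (\<exists>\<beta>\<in>S. \<exists>\<gamma>\<in>Qpos A. xiinv G \<xi> l = \<beta> - \<gamma>)"
    using bounded by (simp add: mem_dominated_by_iff)
  then show ?thesis
    by (intro conjI allI exI[of _ S] \<open>finite S\<close> fibres
        Ycoeff_in_Yring[OF \<open>finite S\<close> bounded fibres lpair_lcoset_mod4[OF assms(1) wf assms(4)]])
qed

end
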